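(* For every $f\in\mathbb Z[\mathbf t][\mathbf x]$, $$f(\mathbf x;\mathbf t)=\sum_{F}a_F\,\mathfrak P_F(\mathbf x;\mathbf t)\quad\text{(finite sum over indexed forests)},$$ where for each indexed forest $F$ and each factorization $F=\underline{i_1}\cdot\underline{i_2}\cdots\underline{i_k}$ into elementary forests, $$a_F=\mathrm{ev}_{A_0}\,E_{i_1,A_1}E_{i_2,A_2}\cdots E_{i_k,A_k}\,f,\qquad A_j=i_{j+1}\star i_{j+2}\star\cdots\star i_k\ (0\le j\le k),$$ with $A_k=\emptyset$ (for $F=\emptyset$, $a_\emptyset=f(\mathbf t;\mathbf t)$).
   Context: $\mathbf x=(x_1,x_2,\dots)$, $\mathbf t=(t_1,t_2,\dots)$. For a finite $A\subset\mathbb N$ let $\overline A_1<\overline A_2<\cdots$ enumerate $\mathbb N\setminus A$ and $t_{i,A}=t_{\overline A_i}$. Define $\mathrm{ev}_Af=f(t_{1,A},t_{2,A},\dots;\mathbf t)$, $R^-_{i,A}f=f(x_1,\dots,x_{i-1},t_{i,A},x_i,x_{i+1},\dots;\mathbf t)$, $R^+_{i,A}f=f(x_1,\dots,x_i,t_{i,A},x_{i+1},\dots;\mathbf t)$, $E_{i,A}f=(R^+_{i,A}f-R^-_{i,A}f)/(x_i-t_{i,A})$. For finite $A,B\subset\mathbb N$, $A\star B=\{\overline B_i:i\in A\}\cup B$; an integer $i$ is identified with $\{i\}$, and $i_{j+1}\star\cdots\star i_k$ is computed right-nested: $i_{j+1}\star(i_{j+2}\star(\cdots\star\{i_k\}))$.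 Indexed forests: sequences $F=(T_1,T_2,\dots)$ of binary plane trees (each node a leaf or an internal node with ordered left/right children), all but finitely many one-node trees; leaves identified with $\mathbb N$ left to right; $\emptyset$ has no internal nodes. $\rho_F(v)$: leaf reached from internal node $v$ going repeatedly to left children; terminal: both children leaves; $\mathrm{Qdes}(F)=\{\rho_F(v):v\text{ terminal}\}$; $F/i$ deletes the terminal node with $\rho_F(v)=i$ (replacing it and its leaves by one leaf, relabeling). Product: $F\cdot G$ is obtained by grafting, for each $i\in\mathbb N$, the $i$-th tree of $G$ onto the $i$-th leaf of $F$ (identifying that leaf with the root of that tree). The elementary forest $\underline i$ has a single internal node, whose children are the leaves $i$ and $i+1$. Every forest with $k$ internal nodes is a product of $k$ elementary forests. Double forest polynomials: with $R_i^\pm=R^\pm_{i,\emptyset}$, $E_i=E_{i,\emptyset}$, $\mathfrak P_F$ is the unique homogeneous family ($\deg x_i=\deg t_i=1$) with $\mathfrak P_F(\mathbf t;\mathbf t)=\delta_{F,\emptyset}$ and $E_i\mathfrak P_F=\mathfrak P_{F/i}(\mathbf x;\widehat{\mathbf t}_i)$ if $i\in\mathrm{Qdes}(F)$, else $0$, where $\widehat{\mathbf t}_i=(t_1,\dots,t_{i-1},t_{i+1},\dots)$. *)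

theory Defs
  imports Main "HOL-Library.Poly_Mapping" "HOL-Library.Infinite_Set"
begin

(* Conventions: everything is 0-based.  Variables x_0, x_1, ... and t_0, t_1, ...;
   leaves of forests are numbered 0, 1, 2, ...;  the paper's N = {1,2,...} is
   shifted to nat = {0,1,...}. *)

datatype var = X nat | T nat

type_synonym poly = "(var \<Rightarrow>\<^sub>0 nat) \<Rightarrow>\<^sub>0 int"

definition pvar :: "var \<Rightarrow> poly" where
  "pvar v = Poly_Mapping.single (Poly_Mapping.single v 1) 1"

definition pconst :: "int \<Rightarrow> poly" where
  "pconst c = Poly_Mapping.single 0 c"

definition subst :: "(var \<Rightarrow> poly) \<Rightarrow> poly \<Rightarrow> poly" where
  "subst \<sigma> f = (\<Sum>mon\<in>Poly_Mapping.keys f. pconst (Poly_Mapping.lookup f mon) *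
                    (\<Prod>v\<in>Poly_Mapping.keys (mon :: var \<Rightarrow>\<^sub>0 nat). \<sigma> v ^ Poly_Mapping.lookup mon v))"

definition mdeg :: "(var \<Rightarrow>\<^sub>0 nat) \<Rightarrow> nat" where
  "mdeg m = (\<Sum>v\<in>Poly_Mapping.keys m. Poly_Mapping.lookup m v)"

definition homogeneous :: "poly \<Rightarrow> bool" where
  "homogeneous f \<longleftrightarrow> (\<forall>m\<in>Poly_Mapping.keys f. \<forall>m'\<in>Poly_Mapping.keys f. mdeg m = mdeg m')"

definition cobar :: "nat set \<Rightarrow> nat \<Rightarrow> nat" where
  "cobar A i = enumerate (- A) i"

definition tA :: "nat \<Rightarrow> nat set \<Rightarrow> poly" where
  "tA i A = pvar (T (cobar A i))"

definition evA :: "nat set \<Rightarrow> poly \<Rightarrow> poly" where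
  "evA A f = subst (\<lambda>v. case v of X j \<Rightarrow> tA j A | T j \<Rightarrow> pvar (T j)) f"

definition Rminus :: "nat \<Rightarrow> nat set \<Rightarrow> poly \<Rightarrow> poly" where
  "Rminus i A f = subst (\<lambda>v. case v of
       X j \<Rightarrow> (if j < i then pvar (X j) else if j = i then tA i A else pvar (X (j - 1)))
     | T j \<Rightarrow> pvar (T j)) f"

definition Rplus :: "nat \<Rightarrow> nat set \<Rightarrow> poly \<Rightarrow> poly" where
  "Rplus i A f = subst (\<lambda>v. case v of
       X j \<Rightarrow> (if j \<le> i then pvar (X j) else if j = Suc i then tA i A else pvar (X (j - 1)))
     | T j \<Rightarrow> pvar (T j)) f"

definition EA :: "nat \<Rightarrow> nat set \<Rightarrow> poly \<Rightarrow> poly" where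
  "EA i A f = (THE g. (pvar (X i) - tA i A) * g = Rplus i A f - Rminus i A f)"

definition ev_tt :: "poly \<Rightarrow> poly" where
  "ev_tt f = subst (\<lambda>v. case v of X j \<Rightarrow> pvar (T j) | T j \<Rightarrow> pvar (T j)) f"

definition hat_t :: "nat \<Rightarrow> poly \<Rightarrow> poly" where
  "hat_t i f = subst (\<lambda>v. case v of X j \<Rightarrow> pvar (X j)
                                   | T j \<Rightarrow> pvar (T (if j < i then j else Suc j))) f"

definition star :: "nat set \<Rightarrow> nat set \<Rightarrow> nat set" where
  "star A B = cobar B ` A \<union> B"

fun star_list :: "nat list \<Rightarrow> nat set" where
  "star_list [] = {}"
| "star_list (i # is) = star {i} (star_list is)"

datatype tree = Leaf | Node tree tree

fun leaves :: "tree \<Rightarrow> nat" where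
  "leaves Leaf = 1"
| "leaves (Node l r) = leaves l + leaves r"

type_synonym forest = "nat \<Rightarrow> tree"

definition is_forest :: "forest \<Rightarrow> bool" where
  "is_forest F \<longleftrightarrow> finite {j. F j \<noteq> Leaf}"

definition off :: "forest \<Rightarrow> nat \<Rightarrow> nat" where
  "off F j = (\<Sum>k<j. leaves (F k))"

definition empty_forest :: forest where
  "empty_forest = (\<lambda>_. Leaf)"

text \<open>rho-values of terminal nodes of a tree whose leftmost leaf has index o\<close>
fun qd_tree :: "tree \<Rightarrow> nat \<Rightarrow> nat set" where
  "qd_tree Leaf ofs = {}"
| "qd_tree (Node l r) ofs =
     (if l = Leaf \<and> r = Leaf then {ofs} else {}) \<union> qd_tree l ofs \<union> qd_tree r (ofs + leaves l)"

definition Qdes :: "forest \<Rightarrow> nat set" where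
  "Qdes F = (\<Union>j. qd_tree (F j) (off F j))"

fun del_tree :: "tree \<Rightarrow> nat \<Rightarrow> nat \<Rightarrow> tree" where
  "del_tree Leaf ofs i = Leaf"
| "del_tree (Node l r) ofs i =
     (if l = Leaf \<and> r = Leaf \<and> ofs = i then Leaf
      else Node (del_tree l ofs i) (del_tree r (ofs + leaves l) i))"

definition fdel :: "forest \<Rightarrow> nat \<Rightarrow> forest" where
  "fdel F i = (\<lambda>j. del_tree (F j) (off F j) i)"

fun graft :: "tree \<Rightarrow> nat \<Rightarrow> forest \<Rightarrow> tree" where
  "graft Leaf ofs G = G ofs"
| "graft (Node l r) ofs G = Node (graft l ofs G) (graft r (ofs + leaves l) G)"

definition fmult :: "forest \<Rightarrow> forest \<Rightarrow> forest" where
  "fmult F G = (\<lambda>j. graft (F j) (off F j) G)"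

definition elem :: "nat \<Rightarrow> forest" where
  "elem i = (\<lambda>j. if j = i then Node Leaf Leaf else Leaf)"

fun fprod :: "nat list \<Rightarrow> forest" where
  "fprod [] = empty_forest"
| "fprod (i # is) = fmult (elem i) (fprod is)"

definition dfp_family :: "(forest \<Rightarrow> poly) \<Rightarrow> bool" where
  "dfp_family P \<longleftrightarrow>
     (\<forall>F. \<not> is_forest F \<longrightarrow> P F = 0) \<and>
     (\<forall>F. is_forest F \<longrightarrow> homogeneous (P F)) \<and>
     (\<forall>F. is_forest F \<longrightarrow> ev_tt (P F) = (if F = empty_forest then 1 else 0)) \<and>
     (\<forall>F i. is_forest F \<longrightarrow>
        EA i {} (P F) = (if i \<in> Qdes F then hat_t i (P (fdel F i)) else 0))"

definition dfp :: "forest \<Rightarrow> poly" where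
  "dfp = (THE P. dfp_family P)"

text \<open>E_{i_1,A_1} E_{i_2,A_2} ... E_{i_k,A_k} f with A_j = star_list (drop j is)\<close>
fun Eseq :: "nat list \<Rightarrow> poly \<Rightarrow> poly" where
  "Eseq [] f = f"
| "Eseq (i # is) f = EA i (star_list is) (Eseq is f)"

definition coef :: "poly \<Rightarrow> nat list \<Rightarrow> poly" where
  "coef f is = evA (star_list is) (Eseq is f)"

end

theory Submission
  imports Defs "HOL-Library.Multiset"
begin

text \<open>
  Three facts
  give the expansion.

  First, the coefficient depends only on the forest \<open>fprod w\<close>: two factorizations of one
  forest ending in different letters i < j meet again after removing both letters, thanks
  to the relation (j - 1) \<cdot> i = i \<cdot> j between elementary forests, which is mirrored by
  a commutation relation between E_{i} and E_{j}.

  Second, a polynomial all of whose coefficients vanish is zero, by induction on the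
  degree: its divided differences vanish, so it equals its own evaluation.

  Third, there is a homogeneous family P_F with coefficients coef(P_F, G) = [F = G].  It is
  obtained by Gram-Schmidt from the monomials x^rho(F), where rho(F) is the multiset of the
  values rho_F(v): at t = 0 their coefficients can be computed by hand and are
  unitriangular for the order comparing first the number of nodes and then the sum of the
  rho-values.  Relabelling the t-variables turns the duality into the recursion defining
  the double forest polynomials, so P_F is the double forest polynomial of F.

  Hence f minus the sum of coef(f, F) times the double forest polynomial of F has no
  nonzero coefficient, and vanishes.
\<close>

text \<open>Any linear order on the variables orders the monomials linearly, which makes
  \<open>poly\<close> an integral domain (the idom instance of Poly_Mapping); cancelling the
  nonzero factor x_i - t_{i,A} is what makes the divided difference \<open>EA\<close> well defined.\<close>

fun var_code :: "var \<Rightarrow> nat" where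
  "var_code (X n) = 2 * n"
| "var_code (T n) = 2 * n + 1"

lemma var_code_inj: "var_code a = var_code b \<Longrightarrow> a = b"
  by (cases a; cases b; auto; presburger)

instantiation var :: linorder
begin
definition less_eq_var :: "var \<Rightarrow> var \<Rightarrow> bool" where "less_eq_var a b = (var_code a \<le> var_code b)"
definition less_var :: "var \<Rightarrow> var \<Rightarrow> bool" where "less_var a b = (var_code a < var_code b)"
instance
  by standard (auto simp: less_eq_var_def less_var_def intro: var_code_inj)
end

abbreviation xvar :: "nat \<Rightarrow> poly" where "xvar j \<equiv> pvar (X j)"
abbreviation tvar :: "nat \<Rightarrow> poly" where "tvar j \<equiv> pvar (T j)"

definition eval_monomial :: "(var \<Rightarrow> poly) \<Rightarrow> (var \<Rightarrow>\<^sub>0 nat) \<Rightarrow> poly" where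
  "eval_monomial \<sigma> m = (\<Prod>v\<in>Poly_Mapping.keys m. \<sigma> v ^ Poly_Mapping.lookup m v)"

lemma pconst_mult: "pconst c * p = frag_cmul c p"
  unfolding pconst_def
  by (rule poly_mapping_eqI) (simp add: mult_map_scale_conv_mult[symmetric] map.rep_eq frag_cmul_def when_def)

lemma subst_frag_extend: "subst \<sigma> f = frag_extend (eval_monomial \<sigma>) f"
  unfolding subst_def frag_extend_def eval_monomial_def pconst_mult ..

lemma eval_monomial_superset:
  "finite S \<Longrightarrow> Poly_Mapping.keys m \<subseteq> S \<Longrightarrow> eval_monomial \<sigma> m = (\<Prod>v\<in>S. \<sigma> v ^ Poly_Mapping.lookup m v)"
  unfolding eval_monomial_def by (rule prod.mono_neutral_left) (auto simp: in_keys_iff)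

lemma eval_monomial_zero [simp]: "eval_monomial \<sigma> 0 = 1"
  by (simp add: eval_monomial_def)

lemma eval_monomial_add: "eval_monomial \<sigma> (a + b) = eval_monomial \<sigma> a * eval_monomial \<sigma> b"
proof -
  let ?S = "Poly_Mapping.keys a \<union> Poly_Mapping.keys b"
  have "eval_monomial \<sigma> (a + b) = (\<Prod>v\<in>?S. \<sigma> v ^ Poly_Mapping.lookup (a + b) v)"
    by (rule eval_monomial_superset) (auto simp: keys_add)
  also have "\<dots> = (\<Prod>v\<in>?S. \<sigma> v ^ Poly_Mapping.lookup a v) * (\<Prod>v\<in>?S. \<sigma> v ^ Poly_Mapping.lookup b v)"
    by (simp add: lookup_add power_add prod.distrib)
  finally show ?thesis
    by (simp add: eval_monomial_superset[of ?S])
qed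

lemma subst_0 [simp]: "subst \<sigma> 0 = 0"
  by (simp add: subst_frag_extend)

lemma subst_add [simp]: "subst \<sigma> (f + g) = subst \<sigma> f + subst \<sigma> g"
  by (simp add: subst_frag_extend frag_extend_add)

lemma subst_diff [simp]: "subst \<sigma> (f - g) = subst \<sigma> f - subst \<sigma> g"
  by (simp add: subst_frag_extend frag_extend_diff)

lemma subst_sum [simp]: "finite I \<Longrightarrow> subst \<sigma> (\<Sum>i\<in>I. g i) = (\<Sum>i\<in>I. subst \<sigma> (g i))"
  by (induction I rule: finite_induct) auto

lemma subst_single: "subst \<sigma> (Poly_Mapping.single m 1) = eval_monomial \<sigma> m"
  by (simp add: subst_frag_extend)

lemma subst_mult [simp]: "subst \<sigma> (f * g) = subst \<sigma> f * subst \<sigma> g"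
proof -
  have monomial: "subst \<sigma> (Poly_Mapping.single a 1 * Poly_Mapping.single b 1) =
      subst \<sigma> (Poly_Mapping.single a 1) * subst \<sigma> (Poly_Mapping.single b 1)" for a b
    by (simp add: mult_single subst_single eval_monomial_add)
  have right_monomial: "subst \<sigma> (f * Poly_Mapping.single b 1) = subst \<sigma> f * subst \<sigma> (Poly_Mapping.single b 1)" for b
    using subset_UNIV[of "Poly_Mapping.keys f"]
    by (induction f rule: frag_induction) (auto simp: monomial left_diff_distrib)
  show ?thesis
    using subset_UNIV[of "Poly_Mapping.keys g"]
    by (induction g rule: frag_induction) (auto simp: right_diff_distrib right_monomial)
qed

lemma subst_1 [simp]: "subst \<sigma> 1 = 1"
proof -
  have "(1::poly) = Poly_Mapping.single 0 1"
    by (rule poly_mapping_eqI) (simp add: lookup_one lookup_single)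
  then show ?thesis
    by (metis subst_single eval_monomial_zero)
qed

lemma subst_pconst [simp]: "subst \<sigma> (pconst c) = pconst c"
  by (simp add: pconst_def subst_def)

lemma subst_pvar [simp]: "subst \<sigma> (pvar v) = \<sigma> v"
  by (simp add: pvar_def subst_single eval_monomial_def)

lemma subst_power [simp]: "subst \<sigma> (f ^ n) = subst \<sigma> f ^ n"
  by (induction n) auto

lemma subst_prod [simp]: "finite I \<Longrightarrow> subst \<sigma> (\<Prod>i\<in>I. g i) = (\<Prod>i\<in>I. subst \<sigma> (g i))"
  by (induction I rule: finite_induct) auto

lemma subst_prod_mset [simp]: "subst \<sigma> (prod_mset (image_mset g M)) = prod_mset (image_mset (\<lambda>a. subst \<sigma> (g a)) M)"
  by (induction M) auto

lemma subst_subst: "subst \<sigma> (subst \<tau> f) = subst (\<lambda>v. subst \<sigma> (\<tau> v)) f"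
proof -
  have "subst \<sigma> (eval_monomial \<tau> m) = eval_monomial (\<lambda>v. subst \<sigma> (\<tau> v)) m" for m
    by (simp add: eval_monomial_def)
  with subset_UNIV[of "Poly_Mapping.keys f"] show ?thesis
    by (induction f rule: frag_induction) (auto simp: subst_single)
qed

lemma eval_monomial_pvar: "eval_monomial pvar m = Poly_Mapping.single m 1"
proof -
  have power: "(Poly_Mapping.single (Poly_Mapping.single v 1) (1::int)) ^ k = Poly_Mapping.single (Poly_Mapping.single v k) 1" for v k
    by (induction k) (auto simp: mult_single single_add[symmetric] add.commute)
  have prod: "finite S \<Longrightarrow> (\<Prod>v\<in>S. Poly_Mapping.single (g v) (1::int)) = Poly_Mapping.single (\<Sum>v\<in>S. g v) 1" for S g
    by (induction S rule: finite_induct) (auto simp: mult_single)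
  have "m = (\<Sum>v\<in>Poly_Mapping.keys m. Poly_Mapping.single v (Poly_Mapping.lookup m v))"
    by (rule poly_mapping_eqI) (auto simp: lookup_sum lookup_single when_def in_keys_iff)
  moreover have "eval_monomial pvar m =
      (\<Prod>v\<in>Poly_Mapping.keys m. Poly_Mapping.single (Poly_Mapping.single v (Poly_Mapping.lookup m v)) (1::int))"
    unfolding eval_monomial_def pvar_def by (intro prod.cong refl power)
  ultimately show ?thesis
    by (simp add: prod)
qed

lemma subst_pvar_id [simp]: "subst pvar f = f"
proof -
  have "eval_monomial pvar = frag_of"
    by (simp add: fun_eq_iff eval_monomial_pvar)
  then show ?thesis
    by (simp add: subst_frag_extend flip: frag_expansion)
qed

definition vars :: "poly \<Rightarrow> var set" where
  "vars f = (\<Union>m\<in>Poly_Mapping.keys f. Poly_Mapping.keys m)"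

lemma subst_cong_vars:
  assumes "\<And>v. v \<in> vars f \<Longrightarrow> \<sigma> v = \<tau> v"
  shows "subst \<sigma> f = subst \<tau> f"
  unfolding subst_frag_extend
proof (rule frag_extend_eq)
  fix m assume "m \<in> Poly_Mapping.keys f"
  then show "eval_monomial \<sigma> m = eval_monomial \<tau> m"
    unfolding eval_monomial_def by (intro prod.cong refl) (use assms in \<open>force simp: vars_def\<close>)
qed

lemma subst_id_vars: "(\<And>v. v \<in> vars f \<Longrightarrow> \<sigma> v = pvar v) \<Longrightarrow> subst \<sigma> f = f"
  using subst_cong_vars[of f \<sigma> pvar] by simp

lemma dvd_prod_diff:
  fixes d :: "'a::comm_ring_1"
  assumes "finite S" "\<And>v. v \<in> S \<Longrightarrow> d dvd (a v - b v)"
  shows "d dvd ((\<Prod>v\<in>S. a v) - (\<Prod>v\<in>S. b v))"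
  using assms
proof (induction S rule: finite_induct)
  case (insert x F)
  have "(\<Prod>v\<in>insert x F. a v) - (\<Prod>v\<in>insert x F. b v) =
      a x * ((\<Prod>v\<in>F. a v) - (\<Prod>v\<in>F. b v)) + (a x - b x) * (\<Prod>v\<in>F. b v)"
    using insert by (simp add: algebra_simps)
  then show ?case
    using insert by simp
qed simp

lemma subst_dvd_diff:
  assumes "\<And>v. d dvd (\<sigma> v - \<tau> v)"
  shows "d dvd (subst \<sigma> f - subst \<tau> f)"
  using subset_UNIV[of "Poly_Mapping.keys f"]
proof (induction f rule: frag_induction)
  case (one m)
  have "d dvd (\<sigma> v ^ k - \<tau> v ^ k)" for v k
    using dvd_prod_diff[of "{..<k}" d "\<lambda>_. \<sigma> v" "\<lambda>_. \<tau> v"] assms by simp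
  then show ?case
    unfolding subst_single eval_monomial_def by (intro dvd_prod_diff) auto
next
  case (diff a b)
  have "subst \<sigma> (a - b) - subst \<tau> (a - b) = (subst \<sigma> a - subst \<tau> a) - (subst \<sigma> b - subst \<tau> b)"
    by simp
  then show ?case
    using diff by (metis dvd_diff)
qed simp

lemma pvar_inj [simp]: "pvar v = pvar w \<longleftrightarrow> v = w"
proof
  assume "pvar v = pvar w"
  then have "Poly_Mapping.single v (1::nat) = Poly_Mapping.single w 1"
    unfolding pvar_def by (metis lookup_single_eq lookup_single_not_eq zero_neq_one)
  then show "v = w"
    by (metis lookup_single_eq lookup_single_not_eq zero_neq_one)
qed simp

lemma pvar_nonzero [simp]: "pvar v \<noteq> 0"
  unfolding pvar_def by simp

lemma pconst_1: "pconst 1 = 1"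
  unfolding pconst_def by (rule poly_mapping_eqI) (simp add: lookup_one lookup_single)

lemma pconst_mult_pconst: "pconst a * pconst b = pconst (a * b)"
  unfolding pconst_def by (simp add: mult_single)

lemma pconst_0: "pconst 0 = 0"
  unfolding pconst_def by simp

lemma pconst_uminus: "- pconst a = pconst (- a)"
  unfolding pconst_def by (simp add: single_uminus)

lemma pconst_inj: "pconst a = pconst b \<Longrightarrow> a = b"
  unfolding pconst_def by (metis lookup_single_eq)

lemma enumerate_eq_strict_mono:
  fixes S :: "nat set"
  assumes "infinite S" "strict_mono h" "range h = S"
  shows "enumerate S n = h n"
proof (induction n)
  case 0
  have "h 0 \<le> s" if "s \<in> S" for s
    using assms(2,3) that by (auto simp: strict_mono_less_eq)
  then show ?case
    using assms(3) by (auto simp: enumerate_0 intro!: Least_equality)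
next
  case (Suc n)
  have "enumerate S (Suc n) = (LEAST s. s \<in> S \<and> enumerate S n < s)"
    using enumerate_Suc''[OF assms(1)] .
  also have "\<dots> = h (Suc n)"
  proof (rule Least_equality)
    show "h (Suc n) \<in> S \<and> enumerate S n < h (Suc n)"
      using assms(2,3) Suc by (auto simp: strict_mono_def)
    fix y assume "y \<in> S \<and> enumerate S n < y"
    then obtain k where "y = h k" "h n < h k"
      using assms(3) Suc by auto
    then show "h (Suc n) \<le> y"
      using assms(2) by (simp add: strict_mono_less strict_mono_less_eq Suc_le_eq)
  qed
  finally show ?case .
qed

lemma infinite_Compl_nat: "finite (A::nat set) \<Longrightarrow> infinite (- A)"
  by (simp add: Compl_eq_Diff_UNIV infinite_UNIV_nat)

lemma strict_mono_cobar: "finite A \<Longrightarrow> strict_mono (cobar A)"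
  unfolding cobar_def by (intro strict_mono_enumerate infinite_Compl_nat)

lemma range_cobar: "finite A \<Longrightarrow> range (cobar A) = - A"
  unfolding cobar_def by (intro range_enumerate infinite_Compl_nat)

lemma cobar_notin: "finite A \<Longrightarrow> cobar A j \<notin> A"
  using range_cobar by blast

lemma cobar_inj: "finite A \<Longrightarrow> cobar A i = cobar A j \<longleftrightarrow> i = j"
  using strict_mono_cobar strict_mono_eq by blast

lemma cobar_eqI: "finite A \<Longrightarrow> strict_mono h \<Longrightarrow> range h = - A \<Longrightarrow> cobar A = h"
  unfolding cobar_def by (intro ext enumerate_eq_strict_mono infinite_Compl_nat)

lemma cobar_empty: "cobar {} = id"
  by (rule cobar_eqI) (auto simp: strict_mono_def)

lemma cobar_single: "cobar {i} j = (if j < i then j else Suc j)"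
proof -
  have "range (\<lambda>j. if j < i then j else Suc j) = - {i}"
  proof (intro equalityI subsetI)
    fix x assume "x \<in> - {i}"
    then show "x \<in> range (\<lambda>j. if j < i then j else Suc j)"
      by (cases "x < i") (auto intro: image_eqI[of _ _ x] image_eqI[of _ _ "x - 1"])
  qed auto
  then have "cobar {i} = (\<lambda>j. if j < i then j else Suc j)"
    by (intro cobar_eqI) (auto simp: strict_mono_def)
  then show ?thesis
    by simp
qed

lemma finite_star [simp]: "finite S \<Longrightarrow> finite B \<Longrightarrow> finite (star S B)"
  by (simp add: star_def)

lemma star_empty_left [simp]: "star {} B = B"
  by (simp add: star_def)

lemma star_single_empty: "star {i} {} = {i}"
  by (simp add: star_def cobar_empty)

lemma cobar_star:
  assumes "finite S" "finite B"
  shows "cobar (star S B) = cobar B \<circ> cobar S"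
proof (rule cobar_eqI)
  show "strict_mono (cobar B \<circ> cobar S)"
    using strict_mono_cobar assms by (simp add: strict_mono_def)
  have "cobar B ` (- S) = - star S B"
  proof (intro equalityI subsetI)
    fix x assume x: "x \<in> - star S B"
    then obtain k where "x = cobar B k"
      using range_cobar[OF assms(2)] by (auto simp: star_def)
    with x show "x \<in> cobar B ` (- S)"
      by (auto simp: star_def)
  qed (use assms in \<open>auto simp: star_def cobar_inj cobar_notin\<close>)
  then show "range (cobar B \<circ> cobar S) = - star S B"
    by (metis range_cobar[OF assms(1)] image_comp)
qed (use assms in simp)

lemma cobar_star_apply: "finite S \<Longrightarrow> finite B \<Longrightarrow> cobar (star S B) j = cobar B (cobar S j)"
  using cobar_star by simp

lemma star_assoc:
  assumes "finite S" "finite B"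
  shows "star (star A S) B = star A (star S B)"
proof -
  have "cobar (star S B) ` A = cobar B ` cobar S ` A"
    by (simp add: cobar_star_apply assms image_image)
  then show ?thesis
    by (simp only: star_def[of A "star S B"]) (simp add: star_def image_Un Un_assoc)
qed

lemma star_single_swap:
  assumes "i < j" "finite B"
  shows "star {i} (star {j} B) = star {j - 1} (star {i} B)"
proof -
  have "star {i} {j} = star {j - 1} {i}"
    using assms by (auto simp: star_def cobar_single)
  then show ?thesis
    using star_assoc[of "{j}" B "{i}"] star_assoc[of "{i}" B "{j - 1}"] assms(2) by simp
qed

section \<open>Divided differences\<close>

definition insert_x :: "nat \<Rightarrow> poly \<Rightarrow> poly \<Rightarrow> poly" where
  "insert_x k e = subst (\<lambda>v. case v of
       X j \<Rightarrow> if j < k then xvar j else if j = k then e else xvar (j - 1)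
     | T j \<Rightarrow> tvar j)"

definition Rdiff :: "nat \<Rightarrow> poly \<Rightarrow> poly \<Rightarrow> poly" where
  "Rdiff i e f = insert_x (Suc i) e f - insert_x i e f"

lemma tA_eq: "tA i A = tvar (cobar A i)"
  by (simp add: tA_def)

lemma Rminus_eq_insert_x: "Rminus i A = insert_x i (tA i A)"
  by (simp add: Rminus_def insert_x_def fun_eq_iff)

lemma Rplus_eq_insert_x: "Rplus i A = insert_x (Suc i) (tA i A)"
  by (auto simp: Rplus_def insert_x_def fun_eq_iff less_Suc_eq_le intro!: arg_cong[where f=subst] split: var.split)

lemma insert_x_ring_hom [simp]:
  "insert_x k e (f + g) = insert_x k e f + insert_x k e g"
  "insert_x k e (f - g) = insert_x k e f - insert_x k e g"
  "insert_x k e (f * g) = insert_x k e f * insert_x k e g"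
  "insert_x k e (tvar c) = tvar c"
  "insert_x k e 0 = 0"
  by (simp_all add: insert_x_def)

lemma insert_x_xvar: "insert_x k e (xvar j) = (if j < k then xvar j else if j = k then e else xvar (j - 1))"
  by (simp add: insert_x_def)

lemma Rdiff_dvd: "(xvar i - e) dvd Rdiff i e f"
  unfolding Rdiff_def insert_x_def
proof (rule subst_dvd_diff)
  fix v
  have "(xvar i - e) dvd (e - xvar i)"
    by (metis dvd_minus_iff dvd_refl minus_diff_eq)
  then show "(xvar i - e) dvd
    ((case v of X j \<Rightarrow> if j < Suc i then xvar j else if j = Suc i then e else xvar (j - 1) | T j \<Rightarrow> tvar j) -
     (case v of X j \<Rightarrow> if j < i then xvar j else if j = i then e else xvar (j - 1) | T j \<Rightarrow> tvar j))"
    by (cases v) auto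
qed

lemma Rdiff_linear [simp]:
  "Rdiff i e (f + g) = Rdiff i e f + Rdiff i e g"
  "Rdiff i e (f - g) = Rdiff i e f - Rdiff i e g"
  by (simp_all add: Rdiff_def)

lemma Rdiff_mult_fixed:
  "insert_x (Suc i) e p = q \<Longrightarrow> insert_x i e p = q \<Longrightarrow> Rdiff i e (p * g) = q * Rdiff i e g"
  by (simp add: Rdiff_def right_diff_distrib)

lemma insert_x_commute:
  "k < l \<Longrightarrow> insert_x k (tvar b) (insert_x l (tvar a) f) = insert_x (l - 1) (tvar a) (insert_x k (tvar b) f)"
  unfolding insert_x_def subst_subst
  by (intro arg_cong[where f="\<lambda>s. subst s f"] ext) (auto split: var.split)

lemma Rdiff_commute:
  assumes "Suc i < j"
  shows "Rdiff i (tvar b) (Rdiff j (tvar a) f) = Rdiff (j - 1) (tvar a) (Rdiff i (tvar b) f)"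
  using assms by (simp add: Rdiff_def insert_x_commute)

lemma EA_eq: "(xvar i - tA i A) * EA i A f = Rdiff i (tA i A) f"
proof -
  have "\<exists>!g. (xvar i - tA i A) * g = Rdiff i (tA i A) f"
    using Rdiff_dvd[of i "tA i A" f] by (auto simp: tA_eq elim!: dvdE)
  then show ?thesis
    unfolding EA_def Rplus_eq_insert_x Rminus_eq_insert_x Rdiff_def[symmetric] by (rule theI')
qed

lemma EA_unique:
  assumes "(xvar i - tA i A) * g = Rdiff i (tA i A) f"
  shows "EA i A f = g"
proof -
  have "(xvar i - tA i A) * EA i A f = (xvar i - tA i A) * g"
    using assms EA_eq[of i A f] by simp
  then show ?thesis
    by (simp add: tA_eq)
qed

lemma EA_linear [simp]:
  "EA i A (f + g) = EA i A f + EA i A g"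
  "EA i A (f - g) = EA i A f - EA i A g"
  "EA i A 0 = 0"
  by (rule EA_unique; simp add: distrib_left right_diff_distrib EA_eq Rdiff_def)+

lemma EA_sum: "finite I \<Longrightarrow> EA i A (\<Sum>k\<in>I. g k) = (\<Sum>k\<in>I. EA i A (g k))"
  by (induction I rule: finite_induct) auto

lemma evA_linear [simp]:
  "evA A (f + g) = evA A f + evA A g"
  "evA A (f - g) = evA A f - evA A g"
  "evA A 0 = 0"
  by (simp_all add: evA_def)

lemma evA_sum: "finite I \<Longrightarrow> evA A (\<Sum>k\<in>I. g k) = (\<Sum>k\<in>I. evA A (g k))"
  by (simp add: evA_def)

lemma EA_commute:
  assumes "finite A" "Suc i < j"
  shows "EA i (star {j} A) (EA j A f) = EA (j - 1) (star {i} A) (EA i A f)"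
proof -
  obtain a b where a: "tA j A = tvar a" and b: "tA i A = tvar b"
    by (simp add: tA_eq)
  have "cobar {i} (j - 1) = j" "cobar {j} i = i"
    using assms(2) by (simp_all add: cobar_single)
  then have ta: "tA (j - 1) (star {i} A) = tvar a" and tb: "tA i (star {j} A) = tvar b"
    using assms(1) a b by (simp_all add: tA_eq cobar_star_apply)
  let ?L = "EA i (star {j} A) (EA j A f)" and ?M = "EA (j - 1) (star {i} A) (EA i A f)"
  let ?c = "(xvar i - tvar b) * (xvar (j - 1) - tvar a)"
  have "?c * ?L = (xvar (j - 1) - tvar a) * Rdiff i (tvar b) (EA j A f)"
    using EA_eq[of i "star {j} A" "EA j A f"] tb by (simp add: ac_simps)
  also have "\<dots> = Rdiff i (tvar b) ((xvar j - tvar a) * EA j A f)"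
    using assms(2) by (intro Rdiff_mult_fixed[symmetric]) (auto simp: insert_x_xvar)
  also have "\<dots> = Rdiff i (tvar b) (Rdiff j (tvar a) f)"
    using EA_eq[of j A f] a by simp
  also have "\<dots> = Rdiff (j - 1) (tvar a) (Rdiff i (tvar b) f)"
    using assms(2) by (rule Rdiff_commute)
  also have "\<dots> = Rdiff (j - 1) (tvar a) ((xvar i - tvar b) * EA i A f)"
    using EA_eq[of i A f] b by simp
  also have "\<dots> = (xvar i - tvar b) * Rdiff (j - 1) (tvar a) (EA i A f)"
    using assms(2) by (intro Rdiff_mult_fixed) (auto simp: insert_x_xvar)
  also have "\<dots> = ?c * ?M"
    using EA_eq[of "j - 1" "star {i} A" "EA i A f"] ta by (simp add: ac_simps)
  finally show ?thesis
    by simp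
qed

definition relabel_t :: "nat set \<Rightarrow> poly \<Rightarrow> poly" where
  "relabel_t B = subst (\<lambda>v. case v of X j \<Rightarrow> xvar j | T j \<Rightarrow> tvar (cobar B j))"

lemma hat_t_relabel_t: "hat_t i f = relabel_t {i} f"
  unfolding hat_t_def relabel_t_def cobar_single ..

lemma relabel_t_ring_hom [simp]:
  "relabel_t B (f * g) = relabel_t B f * relabel_t B g"
  "relabel_t B (f - g) = relabel_t B f - relabel_t B g"
  "relabel_t B (xvar i) = xvar i"
  "relabel_t B (tvar c) = tvar (cobar B c)"
  "relabel_t B (if P then 1 else 0) = (if P then 1 else 0)"
  by (simp_all add: relabel_t_def)

lemma relabel_t_insert_x:
  "relabel_t B (insert_x k (tvar c) g) = insert_x k (tvar (cobar B c)) (relabel_t B g)"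
  unfolding relabel_t_def insert_x_def subst_subst
  by (intro arg_cong[where f="\<lambda>s. subst s g"] ext) (auto split: var.split)

lemma relabel_t_evA:
  assumes "finite A" "finite B"
  shows "relabel_t B (evA A g) = evA (star A B) (relabel_t B g)"
  unfolding relabel_t_def evA_def subst_subst
  by (intro arg_cong[where f="\<lambda>s. subst s g"] ext) (auto split: var.split simp: tA_eq cobar_star_apply assms)

lemma relabel_t_EA:
  assumes "finite A" "finite B"
  shows "relabel_t B (EA i A g) = EA i (star A B) (relabel_t B g)"
proof (rule sym, rule EA_unique)
  have "relabel_t B ((xvar i - tA i A) * EA i A g) = relabel_t B (Rdiff i (tA i A) g)"
    by (simp only: EA_eq)
  then show "(xvar i - tA i (star A B)) * relabel_t B (EA i A g) = Rdiff i (tA i (star A B)) (relabel_t B g)"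
    using assms by (simp add: Rdiff_def tA_eq relabel_t_insert_x cobar_star_apply)
qed

definition homog :: "nat \<Rightarrow> poly \<Rightarrow> bool" where
  "homog d f \<longleftrightarrow> (\<forall>m\<in>Poly_Mapping.keys f. mdeg m = d)"

definition homog_part :: "nat \<Rightarrow> poly \<Rightarrow> poly" where
  "homog_part k f = frag_extend (\<lambda>m. if mdeg m = k then frag_of m else 0) f"

definition deg_le :: "nat \<Rightarrow> poly \<Rightarrow> bool" where
  "deg_le d f \<longleftrightarrow> (\<forall>m\<in>Poly_Mapping.keys f. mdeg m \<le> d)"

lemma mdeg_superset:
  "finite S \<Longrightarrow> Poly_Mapping.keys m \<subseteq> S \<Longrightarrow> mdeg m = (\<Sum>v\<in>S. Poly_Mapping.lookup m v)"
  unfolding mdeg_def by (rule sum.mono_neutral_left) (auto simp: in_keys_iff)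

lemma mdeg_add [simp]: "mdeg (a + b) = mdeg a + mdeg b"
proof -
  let ?S = "Poly_Mapping.keys a \<union> Poly_Mapping.keys b"
  have "mdeg (a + b) = (\<Sum>v\<in>?S. Poly_Mapping.lookup (a + b) v)"
    by (rule mdeg_superset) (auto simp: keys_add)
  then show ?thesis
    by (simp add: lookup_add sum.distrib mdeg_superset[of ?S])
qed

lemma mdeg_0 [simp]: "mdeg 0 = 0"
  by (simp add: mdeg_def)

lemma mdeg_single [simp]: "mdeg (Poly_Mapping.single v k) = k"
  by (cases "k = 0") (auto simp: mdeg_def)

lemma mdeg_eq_0: "mdeg m = 0 \<longleftrightarrow> m = 0"
  unfolding mdeg_def by (auto simp: in_keys_iff intro: poly_mapping_eqI)

lemma homog_0 [simp]: "homog d 0"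
  by (simp add: homog_def)

lemma homog_1: "homog 0 (1::poly)"
  by (simp add: homog_def lookup_one in_keys_iff when_def)

lemma homog_pvar [simp]: "homog (Suc 0) (pvar v)"
  by (simp add: homog_def pvar_def)

lemma homog_add: "homog d f \<Longrightarrow> homog d g \<Longrightarrow> homog d (f + g)"
  unfolding homog_def using keys_add[of f g] by blast

lemma homog_diff: "homog d f \<Longrightarrow> homog d g \<Longrightarrow> homog d (f - g)"
  using homog_add[of d f "- g"] by (simp add: homog_def)

lemma homog_sum: "(\<And>i. i \<in> I \<Longrightarrow> homog d (g i)) \<Longrightarrow> homog d (\<Sum>i\<in>I. g i)"
  by (induction I rule: infinite_finite_induct) (auto intro: homog_add)

lemma homog_mult: "homog a p \<Longrightarrow> homog b q \<Longrightarrow> homog (a + b) (p * q)"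
  unfolding homog_def using keys_mult[of p q] by fastforce

lemma homog_power: "homog a p \<Longrightarrow> homog (a * k) (p ^ k)"
proof (induction k)
  case (Suc k)
  then show ?case
    using homog_mult[of a p "a * k" "p ^ k"] by (simp add: algebra_simps)
qed (simp add: homog_1)

lemma homog_prod:
  "finite I \<Longrightarrow> (\<And>i. i \<in> I \<Longrightarrow> homog (a i) (g i)) \<Longrightarrow> homog (\<Sum>i\<in>I. a i) (\<Prod>i\<in>I. g i)"
  by (induction I rule: finite_induct) (auto intro: homog_mult homog_1)

lemma homog_subst:
  assumes "\<And>v. homog 1 (\<sigma> v)" "homog d f"
  shows "homog d (subst \<sigma> f)"
  unfolding subst_frag_extend frag_extend_def
proof (intro homog_sum)
  fix m assume m: "m \<in> Poly_Mapping.keys f"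
  have "homog (\<Sum>v\<in>Poly_Mapping.keys m. 1 * Poly_Mapping.lookup m v) (eval_monomial \<sigma> m)"
    unfolding eval_monomial_def by (intro homog_prod homog_power assms(1)) simp
  then have "homog d (eval_monomial \<sigma> m)"
    using assms(2) m by (simp add: homog_def mdeg_def)
  then show "homog d (frag_cmul (Poly_Mapping.lookup f m) (eval_monomial \<sigma> m))"
    unfolding homog_def using keys_cmul by blast
qed

lemma homog_0_const: "homog 0 f \<Longrightarrow> f = pconst (Poly_Mapping.lookup f 0)"
  unfolding homog_def pconst_def
  by (rule poly_mapping_eqI) (auto simp: lookup_single when_def mdeg_eq_0 in_keys_iff)

lemma homogeneous_homog: "homog d f \<Longrightarrow> homogeneous f"
  by (simp add: homog_def homogeneous_def)

lemma lookup_homog_part: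
  "Poly_Mapping.lookup (homog_part k f) m = (if mdeg m = k then Poly_Mapping.lookup f m else 0)"
proof -
  have "Poly_Mapping.lookup (homog_part k f) m =
      (\<Sum>i\<in>Poly_Mapping.keys f. if i = m \<and> mdeg i = k then Poly_Mapping.lookup f i else 0)"
    unfolding homog_part_def frag_extend_def
    by (auto simp: lookup_sum lookup_single when_def intro!: sum.cong)
  also have "\<dots> = (\<Sum>i\<in>Poly_Mapping.keys f. if i = m then (if mdeg m = k then Poly_Mapping.lookup f i else 0) else 0)"
    by (rule sum.cong) auto
  also have "\<dots> = (if mdeg m = k then Poly_Mapping.lookup f m else 0)"
    by (subst sum.delta) (auto simp: in_keys_iff)
  finally show ?thesis .
qed

lemma homog_homog_part: "homog k (homog_part k f)"
  unfolding homog_def by (auto simp: in_keys_iff lookup_homog_part split: if_splits)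

lemma homog_part_sum: "finite I \<Longrightarrow> homog_part k (\<Sum>i\<in>I. g i) = (\<Sum>i\<in>I. homog_part k (g i))"
  by (simp add: homog_part_def frag_extend_sum comp_def)

lemma homog_part_homog: "homog j f \<Longrightarrow> homog_part k f = (if j = k then f else 0)"
  by (rule poly_mapping_eqI) (auto simp: lookup_homog_part homog_def in_keys_iff)

lemma homog_part_decomp: "f = (\<Sum>k\<in>mdeg ` Poly_Mapping.keys f. homog_part k f)"
proof (rule poly_mapping_eqI)
  fix m
  have "Poly_Mapping.lookup (\<Sum>k\<in>mdeg ` Poly_Mapping.keys f. homog_part k f) m =
      (if mdeg m \<in> mdeg ` Poly_Mapping.keys f then Poly_Mapping.lookup f m else 0)"
    by (simp add: lookup_sum lookup_homog_part sum.delta')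
  then show "Poly_Mapping.lookup f m = Poly_Mapping.lookup (\<Sum>k\<in>mdeg ` Poly_Mapping.keys f. homog_part k f) m"
    by (metis image_eqI in_keys_iff)
qed

lemma homog_part_not_degree: "k \<notin> mdeg ` Poly_Mapping.keys f \<Longrightarrow> homog_part k f = 0"
  by (rule poly_mapping_eqI) (auto simp: lookup_homog_part in_keys_iff)

lemma homog_part_mult_homog:
  assumes "homog a p"
  shows "homog_part (a + k) (p * g) = p * homog_part k g"
proof -
  let ?J = "mdeg ` Poly_Mapping.keys g"
  have "homog_part (a + k) (p * g) = (\<Sum>j\<in>?J. homog_part (a + k) (p * homog_part j g))"
    by (subst homog_part_decomp) (simp add: sum_distrib_left homog_part_sum)
  also have "\<dots> = (\<Sum>j\<in>?J. if j = k then p * homog_part k g else 0)"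
    using homog_part_homog[OF homog_mult[OF assms homog_homog_part]] by (intro sum.cong) auto
  also have "\<dots> = p * homog_part k g"
    using homog_part_not_degree[of k g] by auto
  finally show ?thesis .
qed

lemma homog_quotient:
  assumes p: "homog 1 p" "p \<noteq> 0" and pg: "homog d (p * g)"
  shows "homog (d - 1) g" and "d = 0 \<Longrightarrow> g = 0"
proof -
  have vanish: "homog_part k g = 0" if "Suc k \<noteq> d" for k
  proof -
    have "p * homog_part k g = homog_part (1 + k) (p * g)"
      by (rule homog_part_mult_homog[OF p(1), symmetric])
    then show ?thesis
      using homog_part_homog[OF pg, of "1 + k"] that p(2) by simp
  qed
  let ?K = "mdeg ` Poly_Mapping.keys g"
  have "g = (\<Sum>k\<in>?K. homog_part k g)"
    by (rule homog_part_decomp)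
  also have "\<dots> = (\<Sum>k\<in>?K. if Suc k = d then homog_part k g else 0)"
    using vanish by (intro sum.cong) auto
  finally have decomp: "g = (\<Sum>k\<in>?K. if Suc k = d then homog_part k g else 0)" .
  have "homog (d - 1) (\<Sum>k\<in>?K. if Suc k = d then homog_part k g else 0)"
    by (intro homog_sum) (auto simp: homog_homog_part)
  with decomp show "homog (d - 1) g"
    by simp
  show "g = 0" if "d = 0"
    using decomp that by simp
qed

lemma homog_insert_x: "homog 1 e \<Longrightarrow> homog d f \<Longrightarrow> homog d (insert_x k e f)"
  unfolding insert_x_def by (rule homog_subst) (auto split: var.split)

lemma homog_evA: "homog d f \<Longrightarrow> homog d (evA A f)"
  unfolding evA_def by (rule homog_subst) (auto split: var.split simp: tA_eq)

lemma homog_EA: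
  assumes "homog d f"
  shows "homog (d - 1) (EA i A f)" and "d = 0 \<Longrightarrow> EA i A f = 0"
proof -
  have lin: "homog 1 (xvar i - tA i A)" and "xvar i - tA i A \<noteq> 0"
    by (simp_all add: tA_eq homog_diff)
  moreover have "homog d ((xvar i - tA i A) * EA i A f)"
    unfolding EA_eq Rdiff_def using lin by (simp add: tA_eq homog_diff homog_insert_x assms)
  ultimately show "homog (d - 1) (EA i A f)" and "d = 0 \<Longrightarrow> EA i A f = 0"
    by (rule homog_quotient)+
qed

lemma deg_le_homog: "homog k f \<Longrightarrow> k \<le> d \<Longrightarrow> deg_le d f"
  by (auto simp: homog_def deg_le_def)

lemma deg_le_exists: "\<exists>d. deg_le d f"
  by (rule exI[of _ "Max (mdeg ` Poly_Mapping.keys f)"]) (auto simp: deg_le_def)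

lemma deg_le_add: "deg_le d f \<Longrightarrow> deg_le d g \<Longrightarrow> deg_le d (f + g)"
  unfolding deg_le_def using keys_add[of f g] by blast

lemma deg_le_sum: "(\<And>i. i \<in> I \<Longrightarrow> deg_le d (g i)) \<Longrightarrow> deg_le d (\<Sum>i\<in>I. g i)"
proof (induction I rule: infinite_finite_induct)
  case (insert x F)
  then show ?case
    by (auto intro: deg_le_add)
qed (auto simp: deg_le_def)

lemma deg_le_mdeg: "deg_le d f \<Longrightarrow> k \<in> mdeg ` Poly_Mapping.keys f \<Longrightarrow> k \<le> d"
  by (auto simp: deg_le_def)

lemma deg_le_EA:
  assumes "deg_le d f"
  shows "deg_le (d - 1) (EA i A f)" and "d = 0 \<Longrightarrow> EA i A f = 0"
proof -
  let ?K = "mdeg ` Poly_Mapping.keys f"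
  have EA_decomp: "EA i A f = (\<Sum>k\<in>?K. EA i A (homog_part k f))"
    by (subst homog_part_decomp) (simp add: EA_sum)
  have "deg_le (d - 1) (EA i A (homog_part k f))" if "k \<in> ?K" for k
    by (intro deg_le_homog[OF homog_EA(1)[OF homog_homog_part]] diff_le_mono deg_le_mdeg[OF assms that])
  then show "deg_le (d - 1) (EA i A f)"
    unfolding EA_decomp by (rule deg_le_sum)
  show "EA i A f = 0" if "d = 0"
    unfolding EA_decomp
  proof (intro sum.neutral ballI)
    fix k assume "k \<in> ?K"
    then have "k = 0"
      using deg_le_mdeg[OF assms] that by simp
    then show "EA i A (homog_part k f) = 0"
      using homog_EA(2)[OF homog_homog_part] by simp
  qed
qed

lemma deg_le_0_const: "deg_le 0 f \<Longrightarrow> f = pconst (Poly_Mapping.lookup f 0)"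
  by (rule homog_0_const) (auto simp: deg_le_def homog_def)

definition trunc_x :: "nat \<Rightarrow> poly \<Rightarrow> poly" where
  "trunc_x n = subst (\<lambda>v. case v of X j \<Rightarrow> if j < n then xvar j else 0 | T j \<Rightarrow> tvar j)"

definition x_below :: "nat \<Rightarrow> poly \<Rightarrow> bool" where
  "x_below n g \<longleftrightarrow> trunc_x n g = g"

lemma x_below_exists: "\<exists>n. x_below n g"
proof -
  have "finite (X -` vars g)"
    by (rule finite_vimageI) (auto simp: vars_def inj_def)
  then obtain n where n: "\<And>j. X j \<in> vars g \<Longrightarrow> j < n"
    by (metis finite_nat_bounded lessThan_iff subsetD vimageI)
  have "trunc_x n g = g"
    unfolding trunc_x_def by (rule subst_id_vars) (auto split: var.split dest: n)
  then show ?thesis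
    by (auto simp: x_below_def)
qed

lemma x_below_subst_cong:
  assumes "x_below n g" "\<And>j. j < n \<Longrightarrow> \<sigma> (X j) = \<tau> (X j)" "\<And>j. \<sigma> (T j) = \<tau> (T j)"
  shows "subst \<sigma> g = subst \<tau> g"
proof -
  have "subst \<sigma> (trunc_x n g) = subst \<tau> (trunc_x n g)"
    unfolding trunc_x_def subst_subst
    by (intro arg_cong[where f="\<lambda>s. subst s g"] ext) (auto split: var.split simp: assms)
  then show ?thesis
    using assms(1) by (simp add: x_below_def)
qed

lemma x_below_subst_all: "(\<And>v. x_below m (\<sigma> v)) \<Longrightarrow> x_below m (subst \<sigma> g)"
  unfolding x_below_def trunc_x_def subst_subst by simp

lemma x_below_simps [simp]:
  "x_below m 0"
  "j < m \<Longrightarrow> x_below m (xvar j)"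
  "x_below m (tvar j)"
  "x_below m (tA i A)"
  "x_below m f \<Longrightarrow> x_below m g \<Longrightarrow> x_below m (f - g)"
  by (simp_all add: x_below_def trunc_x_def tA_eq)

lemma x_below_subst:
  assumes "x_below n g" "\<And>j. j < n \<Longrightarrow> x_below m (\<sigma> (X j))" "\<And>j. x_below m (\<sigma> (T j))"
  shows "x_below m (subst \<sigma> g)"
proof -
  let ?\<sigma>' = "\<lambda>v. case v of X j \<Rightarrow> if j < n then \<sigma> (X j) else 0 | T j \<Rightarrow> \<sigma> (T j)"
  have "subst \<sigma> g = subst ?\<sigma>' g"
    by (rule x_below_subst_cong[OF assms(1)]) auto
  moreover have "x_below m (subst ?\<sigma>' g)"
    by (rule x_below_subst_all) (auto split: var.split simp: assms)
  ultimately show ?thesis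
    by simp
qed

lemma x_below_evA: "x_below m (evA A g)"
  unfolding evA_def by (rule x_below_subst_all) (auto split: var.split)

lemma x_below_insert_x_tA: "x_below n g \<Longrightarrow> x_below n (insert_x k (tA i A) g)"
  unfolding insert_x_def by (rule x_below_subst) auto

lemma x_below_insert_x_eq:
  assumes "x_below n g" "n \<le> k"
  shows "insert_x k e g = g"
  using x_below_subst_cong[OF assms(1), of _ pvar] assms(2) by (simp add: insert_x_def)

lemma x_below_EA_eq_0: "x_below n g \<Longrightarrow> n \<le> i \<Longrightarrow> EA i A g = 0"
  by (rule EA_unique) (simp add: Rdiff_def x_below_insert_x_eq)

lemma x_below_EA:
  assumes "x_below n g" "i < n"
  shows "x_below n (EA i A g)"
proof -
  have fixed: "trunc_x n (xvar i - tA i A) = xvar i - tA i A"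
    using assms(2) by (simp add: x_below_def[symmetric])
  have "(xvar i - tA i A) * trunc_x n (EA i A g) = trunc_x n ((xvar i - tA i A) * EA i A g)"
    using fixed by (simp add: trunc_x_def)
  also have "\<dots> = (xvar i - tA i A) * EA i A g"
    unfolding EA_eq Rdiff_def using assms(1) by (simp add: x_below_insert_x_tA flip: x_below_def)
  finally show ?thesis
    by (simp add: x_below_def tA_eq)
qed

text \<open>Peel off the variables from the top: if g involves only x_0, ..., x_m then
  E_{m,B} g = 0 forces g = R^-_{m,B} g, in which x_m has become a t-variable.\<close>

lemma EA_all_zero:
  assumes "\<And>i. EA i B g = 0"
  shows "g = evA B g"
proof -
  obtain n where "x_below n g"
    using x_below_exists by blast
  then show ?thesis
  proof (induction n)
    case 0
    then show ?case
      using x_below_subst_cong[OF 0, of pvar] by (auto simp: evA_def)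
  next
    case (Suc m)
    have "Rdiff m (tA m B) g = 0"
      using EA_eq[of m B g] assms[of m] by simp
    then have "g = insert_x m (tA m B) g"
      using x_below_insert_x_eq[OF Suc.prems, of "Suc m"] by (simp add: Rdiff_def)
    moreover have "x_below m (insert_x m (tA m B) g)"
      unfolding insert_x_def by (rule x_below_subst[OF Suc.prems]) auto
    ultimately show ?case
      using Suc.IH by metis
  qed
qed

lemma EA_mult_x_free:
  assumes "x_below 0 h"
  shows "EA i A (h * f) = h * EA i A f"
proof (rule EA_unique)
  have "Rdiff i (tA i A) (h * f) = h * Rdiff i (tA i A) f"
    using x_below_insert_x_eq[OF assms] by (intro Rdiff_mult_fixed) simp_all
  then show "(xvar i - tA i A) * (h * EA i A f) = Rdiff i (tA i A) (h * f)"
    using EA_eq[of i A f] by (metis mult.left_commute)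
qed

lemma evA_mult_x_free:
  assumes "x_below 0 h"
  shows "evA A (h * f) = h * evA A f"
  using x_below_subst_cong[OF assms, of _ pvar] by (simp add: evA_def)

fun star_word :: "nat list \<Rightarrow> nat set \<Rightarrow> nat set" where
  "star_word [] B = B"
| "star_word (j # js) B = star {j} (star_word js B)"

fun E_word :: "nat list \<Rightarrow> nat set \<Rightarrow> poly \<Rightarrow> poly" where
  "E_word [] B f = f"
| "E_word (j # js) B f = EA j (star_word js B) (E_word js B f)"

definition coef_at :: "nat set \<Rightarrow> poly \<Rightarrow> nat list \<Rightarrow> poly" where
  "coef_at B f w = evA (star_word w B) (E_word w B f)"

lemma coef_eq_coef_at: "coef f w = coef_at {} f w"
proof -
  have "star_list w = star_word w {}" "Eseq w f = E_word w {} f"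
    by (induction w) auto
  then show ?thesis
    by (simp add: coef_def coef_at_def)
qed

lemma finite_star_word [simp]: "finite B \<Longrightarrow> finite (star_word w B)"
  by (induction w) auto

lemma star_word_snoc: "star_word (w @ [i]) B = star_word w (star {i} B)"
  by (induction w) auto

lemma coef_at_Nil: "coef_at B f [] = evA B f"
  by (simp add: coef_at_def)

lemma coef_at_snoc: "coef_at B f (w @ [i]) = coef_at (star {i} B) (EA i B f) w"
proof -
  have "E_word (w @ [i]) B f = E_word w (star {i} B) (EA i B f)"
    by (induction w) (auto simp: star_word_snoc)
  then show ?thesis
    by (simp add: coef_at_def star_word_snoc)
qed

lemma coef_at_relabel_t:
  assumes "finite B"
  shows "coef_at B (relabel_t B g) w = relabel_t B (coef_at {} g w)"
proof -
  have star: "star_word w B = star (star_word w {}) B" for w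
    by (induction w) (auto simp: star_assoc assms)
  have "E_word w B (relabel_t B g) = relabel_t B (E_word w {} g)"
    by (induction w) (auto simp: relabel_t_EA star assms)
  then show ?thesis
    by (simp add: coef_at_def relabel_t_evA star assms)
qed

lemma coef_at_linear [simp]:
  "coef_at B 0 w = 0"
  "coef_at B (f - g) w = coef_at B f w - coef_at B g w"
  by (induction w arbitrary: B f g rule: rev_induct) (simp_all add: coef_at_snoc coef_at_Nil)

lemma coef_at_sum: "finite I \<Longrightarrow> coef_at B (\<Sum>k\<in>I. g k) w = (\<Sum>k\<in>I. coef_at B (g k) w)"
  by (induction w arbitrary: B g rule: rev_induct) (simp_all add: coef_at_snoc coef_at_Nil evA_sum EA_sum)

lemma coef_at_mult_x_free: "x_below 0 h \<Longrightarrow> coef_at B (h * f) w = h * coef_at B f w"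
  by (induction w arbitrary: B f rule: rev_induct)
    (simp_all add: coef_at_snoc coef_at_Nil evA_mult_x_free EA_mult_x_free)

lemma x_below_coef_at: "x_below 0 (coef_at B f w)"
  by (simp add: coef_at_def x_below_evA)

lemma homog_coef_at: "homog d f \<Longrightarrow> homog (d - length w) (coef_at B f w)"
proof (induction w arbitrary: B f d rule: rev_induct)
  case (snoc i w)
  then show ?case
    using snoc.IH[OF homog_EA(1)[OF snoc.prems]] by (simp add: coef_at_snoc)
qed (simp add: coef_at_Nil homog_evA)

lemma coef_at_homog_long: "homog d f \<Longrightarrow> d < length w \<Longrightarrow> coef_at B f w = 0"
proof (induction w arbitrary: B f d rule: rev_induct)
  case (snoc i w)
  show ?case
  proof (cases d)
    case 0
    then show ?thesis
      using homog_EA(2)[OF snoc.prems(1)] by (simp add: coef_at_snoc)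
  next
    case (Suc d')
    then show ?thesis
      using snoc.IH[OF homog_EA(1)[OF snoc.prems(1)]] snoc.prems(2) by (simp add: coef_at_snoc)
  qed
qed simp

lemma coef_at_deg_le_long:
  assumes "deg_le d f" "d < length w"
  shows "coef_at B f w = 0"
proof -
  let ?K = "mdeg ` Poly_Mapping.keys f"
  have "coef_at B f w = (\<Sum>k\<in>?K. coef_at B (homog_part k f) w)"
    by (subst homog_part_decomp) (simp add: coef_at_sum)
  also have "\<dots> = 0"
  proof (intro sum.neutral ballI)
    fix k assume "k \<in> ?K"
    then have "k < length w"
      using deg_le_mdeg[OF assms(1)] assms(2) by fastforce
    then show "coef_at B (homog_part k f) w = 0"
      by (rule coef_at_homog_long[OF homog_homog_part])
  qed
  finally show ?thesis .
qed

lemma coef_at_nonzero_letters: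
  "x_below n g \<Longrightarrow> coef_at B g w \<noteq> 0 \<Longrightarrow> \<forall>a\<in>set w. a < n"
proof (induction w arbitrary: B g rule: rev_induct)
  case (snoc i w)
  have nonzero: "coef_at (star {i} B) (EA i B g) w \<noteq> 0"
    using snoc.prems(2) by (simp add: coef_at_snoc)
  then have "i < n"
    using x_below_EA_eq_0[OF snoc.prems(1), of i B] by (metis coef_at_linear(1) not_le)
  then show ?case
    using snoc.IH[OF x_below_EA[OF snoc.prems(1)] nonzero] by simp
qed simp

lemma coef_at_eq_0_imp_0:
  assumes "\<And>w. coef_at B g w = 0"
  shows "g = 0"
proof -
  obtain d where "deg_le d g"
    using deg_le_exists by blast
  then show ?thesis
    using assms
  proof (induction d arbitrary: B g)
    case 0
    then have "evA B g = g"
      using deg_le_0_const[OF 0(1)] by (metis evA_def subst_pconst)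
    then show ?case
      using 0(2)[of "[]"] by (simp add: coef_at_Nil)
  next
    case (Suc d)
    have "EA i B g = 0" for i
    proof (rule Suc.IH)
      show "deg_le d (EA i B g)"
        using deg_le_EA(1)[OF Suc.prems(1)] by simp
      show "coef_at (star {i} B) (EA i B g) w = 0" for w
        using Suc.prems(2)[of "w @ [i]"] by (simp add: coef_at_snoc)
    qed
    then have "g = evA B g"
      by (rule EA_all_zero)
    then show ?case
      using Suc.prems(2)[of "[]"] by (simp add: coef_at_Nil)
  qed
qed

section \<open>Trees and forests\<close>

abbreviation graft_elem :: "tree \<Rightarrow> nat \<Rightarrow> nat \<Rightarrow> tree" where
  "graft_elem t z i \<equiv> graft t z (elem i)"

lemma leaves_pos [simp]: "0 < leaves t"
  by (induction t) auto

lemma elem_apply: "elem i k = (if k = i then Node Leaf Leaf else Leaf)"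
  by (simp add: elem_def)

lemma graft_elem_outside: "\<not> (z \<le> i \<and> i < z + leaves t) \<Longrightarrow> graft_elem t z i = t"
  by (induction t arbitrary: z) (auto simp: elem_apply)

lemma leaves_graft_elem:
  "leaves (graft_elem t z i) = leaves t + (if z \<le> i \<and> i < z + leaves t then 1 else 0)"
  by (induction t arbitrary: z) (auto simp: elem_apply)

lemma graft_elem_neq_Leaf: "z \<le> i \<Longrightarrow> i < z + leaves t \<Longrightarrow> graft_elem t z i \<noteq> Leaf"
proof
  assume "z \<le> i" "i < z + leaves t" "graft_elem t z i = Leaf"
  then have "leaves Leaf = leaves t + 1"
    by (metis leaves_graft_elem)
  then show False
    using leaves_pos[of t] by simp
qed

lemma qd_tree_range: "q \<in> qd_tree t z \<Longrightarrow> z \<le> q \<and> Suc q < z + leaves t"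
proof (induction t arbitrary: z)
  case (Node l r)
  then show ?case
    by (auto split: if_splits) fastforce+
qed simp

lemma qd_tree_shift: "q + s \<in> qd_tree t (z + s) \<longleftrightarrow> q \<in> qd_tree t z"
proof (induction t arbitrary: z)
  case (Node l r)
  have "q + s \<in> qd_tree r (z + s + leaves l) \<longleftrightarrow> q \<in> qd_tree r (z + leaves l)"
    using Node.IH(2)[of "z + leaves l"] by (simp add: ac_simps)
  then show ?case
    using Node.IH(1)[of z] by auto
qed simp

lemma qd_tree_nonempty: "t \<noteq> Leaf \<Longrightarrow> qd_tree t z \<noteq> {}"
proof (induction t arbitrary: z)
  case (Node l r)
  then show ?case
    by (cases l) auto
qed simp

lemma del_tree_outside: "p \<notin> qd_tree t z \<Longrightarrow> del_tree t z p = t"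
  by (induction t arbitrary: z) (auto split: if_splits)

lemma qd_tree_Node_cases:
  assumes "p \<in> qd_tree (Node l r) z" "\<not> (l = Leaf \<and> r = Leaf)"
  obtains "p \<in> qd_tree l z" "p \<notin> qd_tree r (z + leaves l)"
    | "p \<in> qd_tree r (z + leaves l)" "p \<notin> qd_tree l z"
proof -
  have "p \<in> qd_tree l z \<union> qd_tree r (z + leaves l)"
    using assms by (auto split: if_splits)
  moreover have "\<not> (p \<in> qd_tree l z \<and> p \<in> qd_tree r (z + leaves l))"
    using qd_tree_range[of p l z] qd_tree_range[of p r "z + leaves l"] by auto
  ultimately show ?thesis
    using that by blast
qed

lemma leaves_del_tree: "p \<in> qd_tree t z \<Longrightarrow> Suc (leaves (del_tree t z p)) = leaves t"
proof (induction t arbitrary: z)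
  case (Node l r)
  show ?case
  proof (cases "l = Leaf \<and> r = Leaf")
    case False
    with Node.prems show ?thesis
      by (cases rule: qd_tree_Node_cases) (auto simp: Node.IH del_tree_outside)
  qed (use Node.prems in auto)
qed simp

lemma graft_elem_del_tree: "p \<in> qd_tree t z \<Longrightarrow> graft_elem (del_tree t z p) z p = t"
proof (induction t arbitrary: z)
  case (Node l r)
  show ?case
  proof (cases "l = Leaf \<and> r = Leaf")
    case False
    with Node.prems show ?thesis
    proof (cases rule: qd_tree_Node_cases)
      case 1
      then show ?thesis
        using False Node.IH(1) leaves_del_tree[of p l z] qd_tree_range[of p l z]
        by (auto simp: del_tree_outside graft_elem_outside)
    next
      case 2
      then show ?thesis
        using False Node.IH(2) qd_tree_range[of p r "z + leaves l"]
        by (auto simp: del_tree_outside graft_elem_outside)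
    qed
  qed (use Node.prems in \<open>auto simp: elem_apply\<close>)
qed simp

lemma del_tree_graft_elem:
  assumes "z \<le> i" "i < z + leaves t"
  shows "del_tree (graft_elem t z i) z i = t \<and> i \<in> qd_tree (graft_elem t z i) z"
  using assms
proof (induction t arbitrary: z)
  case (Node l r)
  show ?case
  proof (cases "i < z + leaves l")
    case True
    then have "i \<notin> qd_tree r (z + leaves l + 1)"
      using qd_tree_range[of i r "z + leaves l + 1"] by auto
    then show ?thesis
      using Node.IH(1)[of z] True Node.prems graft_elem_neq_Leaf[of z i l]
      by (simp add: del_tree_outside graft_elem_outside leaves_graft_elem)
  next
    case False
    then have "i \<notin> qd_tree l z" "z \<noteq> i"
      using qd_tree_range[of i l z] leaves_pos[of l] by auto
    then show ?thesis
      using Node.IH(2)[of "z + leaves l"] False Node.prems graft_elem_neq_Leaf[of "z + leaves l" i r]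
      by (simp add: del_tree_outside graft_elem_outside)
  qed
qed (auto simp: elem_apply)

text \<open>Grafting a node onto leaf i destroys the terminal nodes containing that leaf and
  shifts the terminal nodes to its right by one.\<close>

lemma qd_tree_graft_elem_above:
  assumes "z \<le> i" "i < z + leaves t" "i < q" "q \<in> qd_tree (graft_elem t z i) z"
  shows "Suc i < q \<and> q - 1 \<in> qd_tree t z"
  using assms
proof (induction t arbitrary: z)
  case Leaf
  then show ?case
    by (simp add: elem_apply)
next
  case (Node l r)
  show ?case
  proof (cases "i < z + leaves l")
    case True
    have l': "graft_elem l z i \<noteq> Leaf" "leaves (graft_elem l z i) = Suc (leaves l)"
      using True Node.prems(1) graft_elem_neq_Leaf[of z i l] by (simp_all add: leaves_graft_elem)
    then consider "q \<in> qd_tree (graft_elem l z i) z" | "q \<in> qd_tree r (z + leaves l + 1)"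
      using Node.prems(4) True by (auto simp: graft_elem_outside split: if_splits)
    then show ?thesis
    proof cases
      case 2
      then have "Suc (z + leaves l) \<le> q"
        using qd_tree_range by fastforce
      then show ?thesis
        using 2 True qd_tree_shift[of "q - 1" 1 r "z + leaves l"] by auto
    qed (use Node.IH(1) Node.prems True in auto)
  next
    case False
    have "graft_elem r (z + leaves l) i \<noteq> Leaf"
      using False Node.prems(2) graft_elem_neq_Leaf[of "z + leaves l" i r] by simp
    moreover have "q \<notin> qd_tree l z"
      using qd_tree_range[of q l z] False Node.prems(3) by auto
    ultimately have "q \<in> qd_tree (graft_elem r (z + leaves l) i) (z + leaves l)"
      using Node.prems(4) False by (auto simp: graft_elem_outside split: if_splits)
    then show ?thesis
      using Node.IH(2)[of "z + leaves l"] Node.prems False by auto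
  qed
qed

lemma off_0 [simp]: "off F 0 = 0"
  by (simp add: off_def)

lemma off_Suc: "off F (Suc k) = off F k + leaves (F k)"
  by (simp add: off_def)

lemma off_mono: "k \<le> k' \<Longrightarrow> off F k \<le> off F k'"
  by (induction k' rule: dec_induct) (auto simp: off_Suc)

lemma off_strict_mono: "k < k' \<Longrightarrow> off F (Suc k) \<le> off F k'"
  using off_mono[of "Suc k" k'] by simp

lemma off_ge: "k \<le> off F k"
proof (induction k)
  case (Suc k)
  then show ?case
    using leaves_pos[of "F k"] unfolding off_Suc by linarith
qed simp

lemma off_locate: "\<exists>k. off F k \<le> i \<and> i < off F (Suc k)"
proof -
  have "\<exists>k. i < off F (Suc k)"
    using off_ge[of "Suc i" F] by (intro exI[of _ i]) (simp add: Suc_le_eq)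
  then obtain k where k: "i < off F (Suc k)" "\<forall>k'<k. \<not> i < off F (Suc k')"
    using exists_least_iff[of "\<lambda>k. i < off F (Suc k)"] by blast
  have "off F k \<le> i"
    using k(2) by (cases k) auto
  with k(1) show ?thesis
    by blast
qed

lemma off_locate_unique:
  assumes "off F k \<le> i" "i < off F (Suc k)" "off F k' \<le> i" "i < off F (Suc k')"
  shows "k = k'"
  using off_strict_mono[of k k' F] off_strict_mono[of k' k F] assms by (metis leD le_less_trans linorder_neqE_nat)

lemma qd_tree_off: "i \<in> qd_tree (F k) (off F k) \<Longrightarrow> off F k \<le> i \<and> Suc i < off F (Suc k)"
  using qd_tree_range[of i "F k" "off F k"] by (simp add: off_Suc)

lemma qd_tree_unique: "i \<in> qd_tree (F k) (off F k) \<Longrightarrow> i \<in> qd_tree (F k') (off F k') \<Longrightarrow> k = k'"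
  using qd_tree_off[of i F k] qd_tree_off[of i F k'] off_locate_unique[of F k i k'] by auto

lemma Qdes_iff: "i \<in> Qdes F \<longleftrightarrow> (\<exists>k. i \<in> qd_tree (F k) (off F k))"
  by (simp add: Qdes_def)

lemma off_change:
  assumes "\<And>k. k \<noteq> k0 \<Longrightarrow> G k = F k" "leaves (G k0) = Suc (leaves (F k0))"
  shows "off G k = (if k \<le> k0 then off F k else Suc (off F k))"
proof (induction k)
  case (Suc k)
  consider "Suc k \<le> k0" | "k = k0" | "k0 < k"
    by linarith
  then show ?case
    by cases (use Suc assms in \<open>simp_all add: off_Suc\<close>)
qed simp

lemma fdel_struct:
  assumes "i \<in> qd_tree (F k0) (off F k0)"
  shows "fdel F i k = (if k = k0 then del_tree (F k0) (off F k0) i else F k)"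
proof (cases "k = k0")
  case False
  then have "i \<notin> qd_tree (F k) (off F k)"
    using qd_tree_unique[OF assms] by blast
  then show ?thesis
    using False by (simp add: fdel_def del_tree_outside)
qed (simp add: fdel_def)

lemma fdel_off:
  assumes "i \<in> qd_tree (F k0) (off F k0)"
  shows "off F k = (if k \<le> k0 then off (fdel F i) k else Suc (off (fdel F i) k))"
  by (rule off_change) (auto simp: fdel_struct[OF assms] leaves_del_tree[OF assms])

lemma fmult_struct:
  assumes "off H k0 \<le> i" "i < off H (Suc k0)"
  shows "fmult H (elem i) k = (if k = k0 then graft_elem (H k0) (off H k0) i else H k)"
proof (cases "k = k0")
  case False
  have "\<not> (off H k \<le> i \<and> i < off H k + leaves (H k))"
    using off_locate_unique[OF assms, of k] False by (auto simp: off_Suc)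
  then show ?thesis
    using False by (simp add: fmult_def graft_elem_outside)
qed (simp add: fmult_def)

lemma fmult_off:
  assumes "off H k0 \<le> i" "i < off H (Suc k0)"
  shows "off (fmult H (elem i)) k = (if k \<le> k0 then off H k else Suc (off H k))"
  by (rule off_change) (use assms in \<open>auto simp: fmult_struct[OF assms] leaves_graft_elem off_Suc\<close>)

lemma fdel_fmult_elem: "i \<in> Qdes (fmult H (elem i)) \<and> fdel (fmult H (elem i)) i = H"
proof -
  obtain k0 where k0: "off H k0 \<le> i" "i < off H (Suc k0)"
    using off_locate by blast
  let ?G = "fmult H (elem i)"
  have G0: "?G k0 = graft_elem (H k0) (off H k0) i" "off ?G k0 = off H k0"
    using fmult_struct[OF k0] fmult_off[OF k0] by simp_all
  have del: "del_tree (?G k0) (off ?G k0) i = H k0 \<and> i \<in> qd_tree (?G k0) (off ?G k0)"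
    using del_tree_graft_elem[of "off H k0" i "H k0"] k0 G0 by (simp add: off_Suc)
  then have "fdel ?G i = H"
    using fdel_struct[of i ?G k0] fmult_struct[OF k0] by (auto simp: fun_eq_iff)
  then show ?thesis
    using del Qdes_iff by blast
qed

lemma fmult_elem_cancel: "fmult G (elem i) = fmult H (elem i) \<Longrightarrow> G = H"
  by (metis fdel_fmult_elem)

lemma fmult_fdel:
  assumes "i \<in> Qdes F"
  shows "fmult (fdel F i) (elem i) = F"
proof -
  obtain k0 where q: "i \<in> qd_tree (F k0) (off F k0)"
    using assms Qdes_iff by blast
  let ?G = "fdel F i"
  have o0: "off ?G k0 = off F k0" and o1: "off F (Suc k0) = Suc (off ?G (Suc k0))"
    using fdel_off[OF q, of k0] fdel_off[OF q, of "Suc k0"] by simp_all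
  then have k0: "off ?G k0 \<le> i" "i < off ?G (Suc k0)"
    using qd_tree_off[OF q] by auto
  show ?thesis
    using fmult_struct[OF k0] fdel_struct[OF q] o0 graft_elem_del_tree[OF q] by (auto simp: fun_eq_iff)
qed

lemma Qdes_fmult_elem_above:
  assumes "i < j" "j \<in> Qdes (fmult G (elem i))"
  shows "Suc i < j \<and> j - 1 \<in> Qdes G"
proof -
  obtain k0 where k0: "off G k0 \<le> i" "i < off G (Suc k0)"
    using off_locate by blast
  let ?H = "fmult G (elem i)"
  obtain k where k: "j \<in> qd_tree (?H k) (off ?H k)"
    using assms(2) Qdes_iff by blast
  consider "k < k0" | "k = k0" | "k0 < k"
    by linarith
  then show ?thesis
  proof cases
    case 1
    then have "off ?H (Suc k) \<le> off G k0"
      using fmult_off[OF k0, of "Suc k"] off_mono[of "Suc k" k0 G] by simp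
    then show ?thesis
      using qd_tree_off[OF k] k0 assms(1) by simp
  next
    case 2
    then have "j \<in> qd_tree (graft_elem (G k0) (off G k0) i) (off G k0)"
      using k fmult_struct[OF k0, of k0] fmult_off[OF k0, of k0] by simp
    then show ?thesis
      using qd_tree_graft_elem_above[of "off G k0" i "G k0" j] k0 assms(1) Qdes_iff
      by (auto simp: off_Suc)
  next
    case 3
    then have "j \<in> qd_tree (G k) (Suc (off G k))"
      using k fmult_struct[OF k0, of k] fmult_off[OF k0, of k] by simp
    moreover have "Suc (off G k) \<le> j"
      using qd_tree_range[OF calculation] by simp
    moreover have "off G (Suc k0) \<le> off G k"
      using 3 off_mono[of "Suc k0" k G] by simp
    ultimately show ?thesis
      using qd_tree_shift[of "j - 1" 1 "G k" "off G k"] k0 Qdes_iff by auto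
  qed
qed

lemma is_forest_empty [simp]: "is_forest empty_forest"
  by (simp add: is_forest_def empty_forest_def)

lemma is_forest_fmult_elem:
  assumes "is_forest H"
  shows "is_forest (fmult H (elem i))"
proof -
  obtain k0 where k0: "off H k0 \<le> i" "i < off H (Suc k0)"
    using off_locate by blast
  have "{k. fmult H (elem i) k \<noteq> Leaf} \<subseteq> insert k0 {k. H k \<noteq> Leaf}"
    using fmult_struct[OF k0] by auto
  then show ?thesis
    using assms unfolding is_forest_def by (meson finite_insert finite_subset)
qed

lemma is_forest_fdel: "is_forest F \<Longrightarrow> is_forest (fdel F i)"
  unfolding is_forest_def by (rule finite_subset[rotated]) (auto simp: fdel_def)

lemma leaves_graft: "off G z + leaves (graft t z G) = off G (z + leaves t)"
proof (induction t arbitrary: z)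
  case (Node l r)
  have "off G z + leaves (graft (Node l r) z G) =
      (off G z + leaves (graft l z G)) + leaves (graft r (z + leaves l) G)"
    by simp
  also have "\<dots> = off G (z + leaves l + leaves r)"
    using Node.IH(1)[of z] Node.IH(2)[of "z + leaves l"] by simp
  finally show ?case
    by (simp add: add.assoc)
qed (simp add: off_Suc)

lemma off_fmult: "off (fmult F G) k = off G (off F k)"
proof (induction k)
  case (Suc k)
  then show ?case
    using leaves_graft[of G "off F k" "F k"] by (simp add: off_Suc fmult_def)
qed simp

lemma graft_assoc: "graft (graft t z G) (off G z) H = graft t z (fmult G H)"
proof (induction t arbitrary: z)
  case (Node l r)
  then show ?case
    using leaves_graft[of G z l] by simp
qed (simp add: fmult_def)

lemma fmult_assoc: "fmult (fmult F G) H = fmult F (fmult G H)"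
  by (simp add: fun_eq_iff fmult_def[of "fmult F G"] off_fmult) (simp add: fmult_def graft_assoc)

lemma off_empty_forest [simp]: "off empty_forest k = k"
  by (simp add: off_def empty_forest_def)

lemma fmult_empty_forest_right [simp]: "fmult F empty_forest = F"
proof -
  have "graft t z empty_forest = t" for t z
    by (induction t arbitrary: z) (auto simp: empty_forest_def)
  then show ?thesis
    by (simp add: fmult_def)
qed

lemma fmult_empty_forest_left [simp]: "fmult empty_forest G = G"
  by (simp add: fun_eq_iff fmult_def) (simp add: empty_forest_def)

lemma fprod_snoc: "fprod (w @ [i]) = fmult (fprod w) (elem i)"
  by (induction w) (auto simp: fmult_assoc)

lemma fprod_snoc_iff: "fprod (w @ [i]) = F \<longleftrightarrow> i \<in> Qdes F \<and> fdel F i = fprod w"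
  using fdel_fmult_elem[of i "fprod w"] fmult_fdel[of i F] by (auto simp: fprod_snoc)

lemma is_forest_fprod: "is_forest (fprod w)"
  by (induction w rule: rev_induct) (auto simp: fprod_snoc is_forest_fmult_elem)

lemma off_elem: "off (elem i) k = (if k \<le> i then k else Suc k)"
  by (induction k) (auto simp: off_Suc elem_apply)

lemma elem_commute: "Suc i < j \<Longrightarrow> fmult (elem (j - 1)) (elem i) = fmult (elem i) (elem j)"
  by (auto simp: fun_eq_iff fmult_def off_elem elem_apply)

text \<open>\<open>rho F\<close> is the multiset of the values rho_F(v) over all internal nodes v of F; its size
  is the number of internal nodes.\<close>

fun rho_tree :: "tree \<Rightarrow> nat \<Rightarrow> nat multiset" where
  "rho_tree Leaf z = {#}"
| "rho_tree (Node l r) z = add_mset z (rho_tree l z + rho_tree r (z + leaves l))"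

definition rho :: "forest \<Rightarrow> nat multiset" where
  "rho F = (\<Sum>k\<in>{k. F k \<noteq> Leaf}. rho_tree (F k) (off F k))"

definition shift_up :: "nat \<Rightarrow> nat \<Rightarrow> nat" where
  "shift_up i a = (if i < a then Suc a else a)"

lemma rho_tree_range: "a \<in># rho_tree t z \<Longrightarrow> z \<le> a \<and> a < z + leaves t"
proof (induction t arbitrary: z)
  case (Node l r)
  then show ?case
    using leaves_pos[of l] leaves_pos[of r] by (auto; fastforce)
qed simp

lemma rho_tree_shift: "rho_tree t (z + s) = image_mset (\<lambda>a. a + s) (rho_tree t z)"
proof (induction t arbitrary: z)
  case (Node l r)
  have "rho_tree r (z + s + leaves l) = image_mset (\<lambda>a. a + s) (rho_tree r (z + leaves l))"
    using Node.IH(2)[of "z + leaves l"] by (simp add: ac_simps)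
  then show ?case
    using Node.IH(1)[of z] by simp
qed simp

lemma shift_up_id_rho_tree:
  "(\<And>a. a \<in># rho_tree t z \<Longrightarrow> shift_up i a = a) \<Longrightarrow> image_mset (shift_up i) (rho_tree t z) = rho_tree t z"
  by (simp add: image_mset_cong[where g=id, simplified])

lemma rho_tree_graft_elem:
  assumes "z \<le> i" "i < z + leaves t"
  shows "rho_tree (graft_elem t z i) z = add_mset i (image_mset (shift_up i) (rho_tree t z))"
  using assms
proof (induction t arbitrary: z)
  case (Node l r)
  have uz: "shift_up i z = z"
    using Node.prems by (simp add: shift_up_def)
  show ?case
  proof (cases "i < z + leaves l")
    case True
    have "rho_tree r (z + leaves l + 1) = image_mset (\<lambda>a. a + 1) (rho_tree r (z + leaves l))"
      by (rule rho_tree_shift)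
    also have "\<dots> = image_mset (shift_up i) (rho_tree r (z + leaves l))"
      by (rule image_mset_cong) (use True rho_tree_range in \<open>force simp: shift_up_def\<close>)
    finally show ?thesis
      using Node.IH(1)[of z] True Node.prems uz
      by (simp add: graft_elem_outside leaves_graft_elem)
  next
    case False
    have "image_mset (shift_up i) (rho_tree l z) = rho_tree l z"
      by (rule shift_up_id_rho_tree) (use False rho_tree_range in \<open>force simp: shift_up_def\<close>)
    then show ?thesis
      using Node.IH(2)[of "z + leaves l"] False Node.prems uz by (simp add: graft_elem_outside)
  qed
qed (simp add: elem_apply)

lemma rho_tree_le_qd_tree: "a \<in># rho_tree t z \<Longrightarrow> \<exists>q\<in>qd_tree t z. a \<le> q"
proof (induction t arbitrary: z)
  case (Node l r)
  show ?case
  proof (cases "a = z")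
    case True
    then have "\<exists>q\<in>qd_tree l z \<union> qd_tree r (z + leaves l). a \<le> q" if "l \<noteq> Leaf \<or> r \<noteq> Leaf"
      using that qd_tree_nonempty[of l z] qd_tree_nonempty[of r "z + leaves l"]
        qd_tree_range[of _ l z] qd_tree_range[of _ r "z + leaves l"] by (metis UnCI all_not_in_conv le_add1 order.trans)
    then show ?thesis
      using True by auto
  next
    case False
    then have "a \<in># rho_tree l z \<or> a \<in># rho_tree r (z + leaves l)"
      using Node.prems by auto
    then show ?thesis
      using Node.IH by fastforce
  qed
qed simp

lemma qd_tree_in_rho_tree: "q \<in> qd_tree t z \<Longrightarrow> q \<in># rho_tree t z"
  by (induction t arbitrary: z) (auto split: if_splits)

lemma rho_superset:
  "finite S \<Longrightarrow> {k. F k \<noteq> Leaf} \<subseteq> S \<Longrightarrow> rho F = (\<Sum>k\<in>S. rho_tree (F k) (off F k))"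
  unfolding rho_def by (rule sum.mono_neutral_left) auto

lemma image_mset_sum: "finite S \<Longrightarrow> image_mset f (\<Sum>k\<in>S. g k) = (\<Sum>k\<in>S. image_mset f (g k))"
  by (induction S rule: finite_induct) auto

lemma rho_tree_fmult_elem:
  assumes k0: "off H k0 \<le> i" "i < off H (Suc k0)"
  shows "rho_tree (fmult H (elem i) k) (off (fmult H (elem i)) k) =
    (if k = k0 then {#i#} else {#}) + image_mset (shift_up i) (rho_tree (H k) (off H k))"
proof -
  consider "k < k0" | "k = k0" | "k0 < k"
    by linarith
  then show ?thesis
  proof cases
    case 1
    have "shift_up i a = a" if "a \<in># rho_tree (H k) (off H k)" for a
    proof -
      have "a < off H (Suc k)"
        using rho_tree_range[OF that] by (simp add: off_Suc)
      also have "\<dots> \<le> off H k0"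
        using 1 off_mono[of "Suc k" k0 H] by simp
      finally show ?thesis
        using k0 by (simp add: shift_up_def)
    qed
    then have "image_mset (shift_up i) (rho_tree (H k) (off H k)) = rho_tree (H k) (off H k)"
      by (rule shift_up_id_rho_tree)
    then show ?thesis
      using 1 fmult_struct[OF k0, of k] fmult_off[OF k0, of k] by simp
  next
    case 2
    then show ?thesis
      using fmult_struct[OF k0, of k] fmult_off[OF k0, of k] k0 rho_tree_graft_elem[of "off H k0" i "H k0"]
      by (simp add: off_Suc)
  next
    case 3
    have "off H (Suc k0) \<le> off H k"
      using 3 off_mono[of "Suc k0" k H] by simp
    then have "image_mset (\<lambda>a. a + 1) (rho_tree (H k) (off H k)) = image_mset (shift_up i) (rho_tree (H k) (off H k))"
      using k0 rho_tree_range by (intro image_mset_cong) (force simp: shift_up_def)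
    then show ?thesis
      using 3 fmult_struct[OF k0, of k] fmult_off[OF k0, of k] rho_tree_shift[of "H k" "off H k" 1] by simp
  qed
qed

lemma rho_fmult_elem:
  assumes H: "is_forest H"
  shows "rho (fmult H (elem i)) = add_mset i (image_mset (shift_up i) (rho H))"
proof -
  obtain k0 where k0: "off H k0 \<le> i" "i < off H (Suc k0)"
    using off_locate by blast
  let ?G = "fmult H (elem i)" and ?S = "insert k0 {k. H k \<noteq> Leaf}"
  have fin: "finite ?S"
    using H by (simp add: is_forest_def)
  have "rho ?G = (\<Sum>k\<in>?S. rho_tree (?G k) (off ?G k))"
    using fmult_struct[OF k0] by (intro rho_superset[OF fin]) auto
  also have "\<dots> = {#i#} + (\<Sum>k\<in>?S. image_mset (shift_up i) (rho_tree (H k) (off H k)))"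
    using fin by (simp add: rho_tree_fmult_elem[OF k0] sum.distrib)
  also have "\<dots> = add_mset i (image_mset (shift_up i) (rho H))"
  proof -
    have "rho H = (\<Sum>k\<in>?S. rho_tree (H k) (off H k))"
      by (rule rho_superset[OF fin]) auto
    then show ?thesis
      using fin by (simp add: image_mset_sum)
  qed
  finally show ?thesis .
qed

lemma rho_empty_forest [simp]: "rho empty_forest = {#}"
  by (simp add: rho_def empty_forest_def)

lemma rho_eq_empty_iff:
  assumes "is_forest F"
  shows "rho F = {#} \<longleftrightarrow> F = empty_forest"
proof
  assume empty: "rho F = {#}"
  have "F k = Leaf" for k
  proof (rule ccontr)
    assume "F k \<noteq> Leaf"
    then obtain l r where "F k = Node l r"
      by (cases "F k") auto
    then have "off F k \<in># rho F"
      using assms unfolding rho_def is_forest_def by (auto simp: set_mset_sum intro!: exI[of _ k])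
    with empty show False
      by simp
  qed
  then show "F = empty_forest"
    by (simp add: empty_forest_def fun_eq_iff)
qed simp

lemma size_rho_fprod: "size (rho (fprod w)) = length w"
  by (induction w rule: rev_induct) (simp_all add: fprod_snoc rho_fmult_elem is_forest_fprod)

lemma length_fprod_eq: "fprod w = fprod w' \<Longrightarrow> length w = length w'"
  by (metis size_rho_fprod)

lemma rho_mem:
  assumes "is_forest F" "a \<in># rho F"
  obtains k where "a \<in># rho_tree (F k) (off F k)"
  using assms unfolding rho_def is_forest_def by (auto simp: set_mset_sum)

lemma Qdes_in_rho:
  assumes "is_forest F" "q \<in> Qdes F"
  shows "q \<in># rho F"
proof -
  obtain k where k: "q \<in> qd_tree (F k) (off F k)"
    using assms(2) Qdes_iff by blast
  then have "F k \<noteq> Leaf"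
    by auto
  then show ?thesis
    using qd_tree_in_rho_tree[OF k] assms(1) unfolding rho_def is_forest_def by (auto simp: set_mset_sum)
qed

lemma finite_Qdes: "is_forest F \<Longrightarrow> finite (Qdes F)"
  using Qdes_in_rho by (metis finite_set_mset finite_subset subsetI)

lemma Qdes_nonempty: "F \<noteq> empty_forest \<Longrightarrow> Qdes F \<noteq> {}"
proof -
  assume "F \<noteq> empty_forest"
  then obtain k where "F k \<noteq> Leaf"
    by (auto simp: empty_forest_def)
  then show ?thesis
    using qd_tree_nonempty[of "F k" "off F k"] by (auto simp: Qdes_def)
qed

lemma fprod_surj: "is_forest F \<Longrightarrow> \<exists>w. fprod w = F"
proof (induction "size (rho F)" arbitrary: F)
  case 0
  then show ?case
    using rho_eq_empty_iff[of F] by (intro exI[of _ "[]"]) auto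
next
  case (Suc n)
  then obtain i where i: "i \<in> Qdes F"
    using Qdes_nonempty rho_eq_empty_iff by fastforce
  have "rho F = add_mset i (image_mset (shift_up i) (rho (fdel F i)))"
    using rho_fmult_elem[OF is_forest_fdel[OF Suc.prems]] fmult_fdel[OF i] by metis
  then obtain w where "fprod w = fdel F i"
    using Suc.hyps Suc.prems is_forest_fdel by (metis nat.inject size_add_mset size_image_mset)
  then have "fprod (w @ [i]) = F"
    by (simp add: fprod_snoc fmult_fdel[OF i])
  then show ?case
    by blast
qed

text \<open>Removing the largest element q of Qdes F takes q off rho F and leaves the other
  rho-values in place, because all of them are at most q.\<close>

lemma rho_remove_Max_Qdes:
  assumes "is_forest F" "F \<noteq> empty_forest"
  obtains q where "q \<in> Qdes F" "\<forall>a\<in>#rho F. a \<le> q" "rho F = add_mset q (rho (fdel F q))"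
proof -
  let ?q = "Max (Qdes F)"
  have q: "?q \<in> Qdes F"
    using Max_in[OF finite_Qdes[OF assms(1)] Qdes_nonempty[OF assms(2)]] .
  have bound: "\<forall>a\<in>#rho F. a \<le> ?q"
  proof
    fix a assume "a \<in># rho F"
    then obtain k where "a \<in># rho_tree (F k) (off F k)"
      using rho_mem[OF assms(1)] by blast
    then obtain p where "p \<in> Qdes F" "a \<le> p"
      using rho_tree_le_qd_tree Qdes_iff by blast
    then show "a \<le> ?q"
      using Max_ge[OF finite_Qdes[OF assms(1)]] by (meson order.trans)
  qed
  have rho_F: "rho F = add_mset ?q (image_mset (shift_up ?q) (rho (fdel F ?q)))"
    using rho_fmult_elem[OF is_forest_fdel[OF assms(1)]] fmult_fdel[OF q] by metis
  have "image_mset (shift_up ?q) (rho (fdel F ?q)) = rho (fdel F ?q)"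
  proof (rule image_mset_cong[where g=id, simplified])
    fix a assume "a \<in># rho (fdel F ?q)"
    then have "shift_up ?q a \<le> ?q"
      using bound rho_F by simp
    then show "shift_up ?q a = a"
      by (auto simp: shift_up_def split: if_splits)
  qed
  then show ?thesis
    using that q bound rho_F by simp
qed

lemma fprod_snoc_swap:
  assumes "fprod (u @ [i]) = fprod (u' @ [j])" "i < j"
  obtains v where "Suc i < j" "fprod u = fprod (v @ [j - 1])" "fprod u' = fprod (v @ [i])"
proof -
  have "j \<in> Qdes (fprod (u' @ [j]))"
    using fprod_snoc_iff by blast
  then have "j \<in> Qdes (fmult (fprod u) (elem i))"
    by (metis assms(1) fprod_snoc)
  then have ij: "Suc i < j" and j: "j - 1 \<in> Qdes (fprod u)"
    using Qdes_fmult_elem_above assms(2) by blast+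
  obtain v where v: "fprod v = fdel (fprod u) (j - 1)"
    using fprod_surj[OF is_forest_fdel[OF is_forest_fprod]] by blast
  then have u: "fprod u = fprod (v @ [j - 1])"
    using fmult_fdel[OF j] by (simp add: fprod_snoc)
  have "fmult (fprod u') (elem j) = fmult (fmult (fprod v) (elem (j - 1))) (elem i)"
    using assms(1) u by (simp add: fprod_snoc)
  also have "\<dots> = fmult (fprod (v @ [i])) (elem j)"
    using elem_commute[OF ij] by (simp add: fprod_snoc fmult_assoc)
  finally have "fprod u' = fprod (v @ [i])"
    by (rule fmult_elem_cancel)
  with ij u show ?thesis
    using that by blast
qed

section \<open>Independence of the factorization\<close>

lemma coef_at_swap_step:
  assumes IH: "\<And>v v' B f. length v < length w \<Longrightarrow> finite B \<Longrightarrow> fprod v = fprod v' \<Longrightarrow>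
      coef_at B f v = coef_at B f v'"
    and w: "w = u @ [i]" and w': "w' = u' @ [j]" and eq: "fprod w = fprod w'"
    and "i < j" and B: "finite B"
  shows "coef_at B f w = coef_at B f w'"
proof -
  obtain v where ij: "Suc i < j" and u: "fprod u = fprod (v @ [j - 1])" and u': "fprod u' = fprod (v @ [i])"
    using fprod_snoc_swap eq \<open>i < j\<close> unfolding w w' by metis
  have short: "length u < length w" "length u' < length w"
    using w w' length_fprod_eq[OF eq] by auto
  have "coef_at B f w = coef_at (star {i} B) (EA i B f) u"
    by (simp add: w coef_at_snoc)
  also have "\<dots> = coef_at (star {i} B) (EA i B f) (v @ [j - 1])"
    using IH[OF short(1) _ u] B by simp
  also have "\<dots> = coef_at (star {j - 1} (star {i} B)) (EA (j - 1) (star {i} B) (EA i B f)) v"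
    by (simp add: coef_at_snoc)
  also have "\<dots> = coef_at (star {i} (star {j} B)) (EA i (star {j} B) (EA j B f)) v"
    using EA_commute[OF B ij] star_single_swap[OF \<open>i < j\<close> B] by simp
  also have "\<dots> = coef_at (star {j} B) (EA j B f) (v @ [i])"
    by (simp add: coef_at_snoc)
  also have "\<dots> = coef_at (star {j} B) (EA j B f) u'"
    using IH[OF short(2) _ u'] B by simp
  also have "\<dots> = coef_at B f w'"
    by (simp add: w' coef_at_snoc)
  finally show ?thesis .
qed

theorem coef_at_indep: "finite B \<Longrightarrow> fprod w = fprod w' \<Longrightarrow> coef_at B f w = coef_at B f w'"
proof (induction "length w" arbitrary: w w' B f rule: less_induct)
  case less
  show ?case
  proof (cases w rule: rev_cases)
    case Nil
    then show ?thesis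
      using length_fprod_eq[OF less.prems(2)] by simp
  next
    case (snoc u i)
    obtain u' j where w': "w' = u' @ [j]"
      using length_fprod_eq[OF less.prems(2)] snoc by (cases w' rule: rev_cases) auto
    consider "i = j" | "i < j" | "j < i"
      by linarith
    then show ?thesis
    proof cases
      case 1
      then have "fprod u = fprod u'"
        using less.prems(2) snoc w' by (simp add: fprod_snoc fmult_elem_cancel)
      then show ?thesis
        using less.hyps[of u] snoc w' 1 less.prems(1) by (simp add: coef_at_snoc)
    next
      case 2
      show ?thesis
        by (rule coef_at_swap_step[OF _ snoc w' less.prems(2) 2 less.prems(1)]) (rule less.hyps; simp)
    next
      case 3
      have "coef_at B f w' = coef_at B f w"
        by (rule coef_at_swap_step[OF _ w' snoc less.prems(2)[symmetric] 3 less.prems(1)])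
          (use less.hyps length_fprod_eq[OF less.prems(2)] in simp)
      then show ?thesis
        by simp
    qed
  qed
qed

definition forest_coef :: "poly \<Rightarrow> forest \<Rightarrow> poly" where
  "forest_coef f F = coef_at {} f (SOME w. fprod w = F)"

lemma forest_coef_fprod: "forest_coef f (fprod w) = coef_at {} f w"
proof -
  have "fprod (SOME w'. fprod w' = fprod w) = fprod w"
    by (rule someI) simp
  then show ?thesis
    unfolding forest_coef_def by (intro coef_at_indep) simp_all
qed

lemma finite_forest_coef_nonzero: "finite {F. is_forest F \<and> forest_coef f F \<noteq> 0}"
proof -
  obtain d where d: "deg_le d f"
    using deg_le_exists by blast
  obtain n where n: "x_below n f"
    using x_below_exists by blast
  have "{F. is_forest F \<and> forest_coef f F \<noteq> 0} \<subseteq> fprod ` {w. set w \<subseteq> {..<n} \<and> length w \<le> d}"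
  proof
    fix F assume F: "F \<in> {F. is_forest F \<and> forest_coef f F \<noteq> 0}"
    then obtain w where w: "fprod w = F"
      using fprod_surj by blast
    then have nonzero: "coef_at {} f w \<noteq> 0"
      using F forest_coef_fprod[of f w] by simp
    then have "set w \<subseteq> {..<n}"
      using coef_at_nonzero_letters[OF n] by blast
    moreover have "length w \<le> d"
      using coef_at_deg_le_long[OF d, of w "{}"] nonzero by (meson not_le)
    ultimately show "F \<in> fprod ` {w. set w \<subseteq> {..<n} \<and> length w \<le> d}"
      using w by blast
  qed
  moreover have "finite {w. set w \<subseteq> {..<n} \<and> length w \<le> d}"
    by (rule finite_lists_length_le) simp
  ultimately show ?thesis
    by (meson finite_imageI finite_subset)
qed

lemma evA_empty: "evA {} f = ev_tt f"
  unfolding evA_def ev_tt_def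
  by (intro arg_cong[where f="\<lambda>s. subst s f"] ext) (auto split: var.split simp: tA_eq cobar_empty)

lemma dfp_family_coef_at:
  assumes "dfp_family P" "is_forest F"
  shows "coef_at {} (P F) w = (if fprod w = F then 1 else 0)"
  using assms(2)
proof (induction w arbitrary: F rule: rev_induct)
  case Nil
  then show ?case
    using assms(1) by (auto simp: coef_at_Nil evA_empty dfp_family_def)
next
  case (snoc i u)
  have E: "EA i {} (P F) = (if i \<in> Qdes F then hat_t i (P (fdel F i)) else 0)"
    using assms(1) snoc.prems unfolding dfp_family_def by blast
  have "coef_at {} (P F) (u @ [i]) = coef_at {i} (EA i {} (P F)) u"
    by (simp add: coef_at_snoc star_single_empty)
  also have "\<dots> = (if fprod (u @ [i]) = F then 1 else 0)"
  proof (cases "i \<in> Qdes F")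
    case True
    then have "coef_at {i} (EA i {} (P F)) u = relabel_t {i} (coef_at {} (P (fdel F i)) u)"
      using E by (simp add: hat_t_relabel_t coef_at_relabel_t)
    then show ?thesis
      using True snoc.IH[OF is_forest_fdel[OF snoc.prems]] fprod_snoc_iff[of u i F] by auto
  next
    case False
    then show ?thesis
      using E fprod_snoc_iff[of u i F] by simp
  qed
  finally show ?case .
qed

lemma dfp_family_unique:
  assumes "dfp_family P" "dfp_family Q"
  shows "P = Q"
proof
  fix F
  show "P F = Q F"
  proof (cases "is_forest F")
    case True
    have "P F - Q F = 0"
    proof (rule coef_at_eq_0_imp_0[of "{}"])
      fix w
      show "coef_at {} (P F - Q F) w = 0"
        using dfp_family_coef_at[OF assms(1) True] dfp_family_coef_at[OF assms(2) True] by simp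
    qed
    then show ?thesis
      by simp
  next
    case False
    then show ?thesis
      using assms unfolding dfp_family_def by simp
  qed
qed

lemma dfp_familyI:
  assumes coef: "\<And>F w. is_forest F \<Longrightarrow> coef_at {} (P F) w = (if fprod w = F then 1 else 0)"
    and homog: "\<And>F. is_forest F \<Longrightarrow> homog (size (rho F)) (P F)"
    and not_forest: "\<And>F. \<not> is_forest F \<Longrightarrow> P F = 0"
  shows "dfp_family P"
  unfolding dfp_family_def
proof (intro conjI allI impI)
  fix F i assume F: "is_forest F"
  show "homogeneous (P F)"
    using homog[OF F] by (rule homogeneous_homog)
  show "ev_tt (P F) = (if F = empty_forest then 1 else 0)"
    using coef[OF F, of "[]"] by (simp add: coef_at_Nil evA_empty eq_commute)
  have E: "coef_at {i} (EA i {} (P F)) u = (if fprod (u @ [i]) = F then 1 else 0)" for u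
    using coef[OF F, of "u @ [i]"] by (simp add: coef_at_snoc star_single_empty)
  show "EA i {} (P F) = (if i \<in> Qdes F then hat_t i (P (fdel F i)) else 0)"
  proof (cases "i \<in> Qdes F")
    case True
    have H: "coef_at {i} (hat_t i (P (fdel F i))) u = (if fprod u = fdel F i then 1 else 0)" for u
      using coef[OF is_forest_fdel[OF F]] by (simp add: hat_t_relabel_t coef_at_relabel_t)
    have "EA i {} (P F) - hat_t i (P (fdel F i)) = 0"
    proof (rule coef_at_eq_0_imp_0[of "{i}"])
      fix u
      show "coef_at {i} (EA i {} (P F) - hat_t i (P (fdel F i))) u = 0"
        using E[of u] H[of u] True fprod_snoc_iff[of u i F] by simp
    qed
    then show ?thesis
      using True by simp
  next
    case False
    have "EA i {} (P F) = 0"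
    proof (rule coef_at_eq_0_imp_0[of "{i}"])
      fix u
      show "coef_at {i} (EA i {} (P F)) u = 0"
        using E[of u] False fprod_snoc_iff[of u i F] by simp
    qed
    then show ?thesis
      using False by simp
  qed
qed (use not_forest in simp)

section \<open>Coefficients of monomials in x at t = 0\<close>

text \<open>A coefficient of a homogeneous polynomial of degree equal to the word length is a
  constant, so it may be computed after setting t = 0.  There E_i acts on monomials
  x^M (M a multiset of indices) by an explicit rule, recorded in \<open>E0_xmonomial\<close>.\<close>

definition xmonomial :: "nat multiset \<Rightarrow> poly" where
  "xmonomial M = prod_mset (image_mset xvar M)"

definition t_to_zero :: "poly \<Rightarrow> poly" where
  "t_to_zero = subst (\<lambda>v. case v of X j \<Rightarrow> xvar j | T j \<Rightarrow> 0)"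

definition shift_down :: "nat \<Rightarrow> nat \<Rightarrow> nat" where
  "shift_down p a = (if p < a then a - 1 else a)"

definition E0_xmonomial :: "nat \<Rightarrow> nat multiset \<Rightarrow> int \<times> nat multiset" where
  "E0_xmonomial i M =
     (if i \<in># M \<and> Suc i \<notin># M then (1, image_mset (shift_down (Suc i)) (M - {#i#}))
      else if i \<notin># M \<and> Suc i \<in># M then (-1, image_mset (shift_down i) (M - {#Suc i#}))
      else (0, {#}))"

fun coef0_rev :: "nat multiset \<Rightarrow> nat list \<Rightarrow> int" where
  "coef0_rev M [] = (if M = {#} then 1 else 0)"
| "coef0_rev M (i # ws) = fst (E0_xmonomial i M) * coef0_rev (snd (E0_xmonomial i M)) ws"

definition coef0 :: "nat multiset \<Rightarrow> nat list \<Rightarrow> int" where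
  "coef0 M w = coef0_rev M (rev w)"

lemma coef0_Nil: "coef0 M [] = (if M = {#} then 1 else 0)"
  by (simp add: coef0_def)

lemma coef0_snoc: "coef0 M (u @ [i]) = fst (E0_xmonomial i M) * coef0 (snd (E0_xmonomial i M)) u"
  by (simp add: coef0_def)

lemma xmonomial_simps [simp]:
  "xmonomial {#} = 1"
  "xmonomial (add_mset a M) = xvar a * xmonomial M"
  by (simp_all add: xmonomial_def)

lemma homog_xmonomial: "homog (size M) (xmonomial M)"
proof (induction M)
  case (add a M)
  then show ?case
    using homog_mult[OF homog_pvar add] by simp
qed (simp add: homog_1)

lemma subst_xmonomial: "subst \<sigma> (xmonomial M) = prod_mset (image_mset (\<lambda>a. \<sigma> (X a)) M)"
  by (simp add: xmonomial_def)

lemma t_to_zero_simps [simp]: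
  "t_to_zero (xmonomial M) = xmonomial M"
  "t_to_zero (pconst c) = pconst c"
  "t_to_zero (f * g) = t_to_zero f * t_to_zero g"
  "t_to_zero (f - g) = t_to_zero f - t_to_zero g"
  by (simp_all add: t_to_zero_def subst_xmonomial xmonomial_def)

lemma t_to_zero_insert_x: "t_to_zero (insert_x k (tvar c) f) = insert_x k 0 (t_to_zero f)"
  unfolding t_to_zero_def insert_x_def subst_subst
  by (intro arg_cong[where f="\<lambda>s. subst s f"] ext) (auto split: var.split)

lemma t_to_zero_EA: "xvar i * t_to_zero (EA i A f) = Rdiff i 0 (t_to_zero f)"
proof -
  have "t_to_zero ((xvar i - tA i A) * EA i A f) = xvar i * t_to_zero (EA i A f)"
    by (simp add: t_to_zero_def tA_eq)
  moreover have "t_to_zero (Rdiff i (tA i A) f) = Rdiff i 0 (t_to_zero f)"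
    by (simp add: Rdiff_def tA_eq t_to_zero_insert_x)
  ultimately show ?thesis
    by (simp add: EA_eq)
qed

lemma t_to_zero_evA: "t_to_zero (evA A f) = subst (\<lambda>v. 0) (t_to_zero f)"
  unfolding t_to_zero_def evA_def subst_subst
  by (intro arg_cong[where f="\<lambda>s. subst s f"] ext) (auto split: var.split simp: tA_eq)

lemma insert_x_0_xmonomial:
  "insert_x k 0 (xmonomial M) = (if k \<in># M then 0 else xmonomial (image_mset (shift_down k) M))"
proof -
  have "insert_x k 0 (xmonomial M) = prod_mset (image_mset (\<lambda>a. if a = k then 0 else xvar (shift_down k a)) M)"
    unfolding insert_x_def subst_xmonomial
    by (intro arg_cong[where f=prod_mset] image_mset_cong) (auto simp: shift_down_def)
  also have "\<dots> = (if k \<in># M then 0 else xmonomial (image_mset (shift_down k) M))"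
    by (induction M) auto
  finally show ?thesis .
qed

lemma Rdiff_0_xmonomial:
  "Rdiff i 0 (xmonomial M) = xvar i * (pconst (fst (E0_xmonomial i M)) * xmonomial (snd (E0_xmonomial i M)))"
proof -
  consider "i \<in># M \<and> Suc i \<notin># M" | "i \<notin># M \<and> Suc i \<in># M" | "i \<in># M \<longleftrightarrow> Suc i \<in># M"
    by blast
  then show ?thesis
  proof cases
    case 1
    then have "image_mset (shift_down (Suc i)) M = add_mset i (image_mset (shift_down (Suc i)) (M - {#i#}))"
      by (metis (no_types, lifting) shift_down_def image_mset_add_mset insert_DiffM lessI less_SucI not_less_eq)
    then show ?thesis
      using 1 by (simp add: Rdiff_def insert_x_0_xmonomial E0_xmonomial_def pconst_1)
  next
    case 2
    then have "image_mset (shift_down i) M = add_mset i (image_mset (shift_down i) (M - {#Suc i#}))"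
      by (metis (no_types, lifting) shift_down_def image_mset_add_mset insert_DiffM lessI diff_Suc_1)
    then show ?thesis
      using 2 by (simp add: Rdiff_def insert_x_0_xmonomial E0_xmonomial_def pconst_1 flip: pconst_uminus)
  next
    case 3
    have "image_mset (shift_down (Suc i)) M = image_mset (shift_down i) M" if "i \<notin># M" "Suc i \<notin># M"
    proof (rule image_mset_cong)
      fix x assume "x \<in># M"
      then have "x \<noteq> i" "x \<noteq> Suc i"
        using that by auto
      then show "shift_down (Suc i) x = shift_down i x"
        by (auto simp: shift_down_def)
    qed
    then show ?thesis
      using 3 by (auto simp: Rdiff_def insert_x_0_xmonomial E0_xmonomial_def pconst_0)
  qed
qed

lemma t_to_zero_EA_xmonomial:
  assumes "t_to_zero f = pconst c * xmonomial M"
  shows "t_to_zero (EA i A f) = pconst (c * fst (E0_xmonomial i M)) * xmonomial (snd (E0_xmonomial i M))"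
proof -
  have "Rdiff i 0 (pconst c * xmonomial M) = pconst c * Rdiff i 0 (xmonomial M)"
    by (simp add: Rdiff_def insert_x_def right_diff_distrib)
  then have "xvar i * t_to_zero (EA i A f) =
      xvar i * (pconst (c * fst (E0_xmonomial i M)) * xmonomial (snd (E0_xmonomial i M)))"
    using t_to_zero_EA[of i A f] assms by (simp add: Rdiff_0_xmonomial pconst_mult_pconst ac_simps)
  then show ?thesis
    by simp
qed

lemma t_to_zero_coef_at_xmonomial:
  assumes "t_to_zero f = pconst c * xmonomial M"
  shows "t_to_zero (coef_at B f w) = pconst (c * coef0 M w)"
  using assms
proof (induction w arbitrary: B f c M rule: rev_induct)
  case Nil
  have "subst (\<lambda>v. 0) (xmonomial M) = (if M = {#} then 1 else 0)"
    by (induction M) auto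
  then show ?case
    using Nil by (simp add: coef_at_Nil t_to_zero_evA coef0_Nil pconst_1 pconst_0)
next
  case (snoc i u)
  then show ?case
    using snoc.IH[OF t_to_zero_EA_xmonomial[OF snoc.prems]] by (simp add: coef_at_snoc coef0_snoc mult.assoc)
qed

lemma coef_at_xmonomial:
  assumes "length w = size M"
  shows "coef_at B (xmonomial M) w = pconst (coef0 M w)"
proof -
  have "homog 0 (coef_at B (xmonomial M) w)"
    using homog_coef_at[OF homog_xmonomial, of M w B] assms by simp
  then obtain k where k: "coef_at B (xmonomial M) w = pconst k"
    using homog_0_const by blast
  have "t_to_zero (coef_at B (xmonomial M) w) = pconst (1 * coef0 M w)"
    by (rule t_to_zero_coef_at_xmonomial) (simp add: pconst_1)
  then show ?thesis
    using k by simp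
qed

lemma coef0_indep:
  assumes "fprod w = fprod w'" "length w = size M"
  shows "coef0 M w = coef0 M w'"
proof -
  have "length w' = size M"
    using length_fprod_eq[OF assms(1)] assms(2) by simp
  then have "pconst (coef0 M w) = pconst (coef0 M w')"
    using coef_at_xmonomial[OF assms(2), of "{}"] coef_at_indep[OF _ assms(1), of "{}" "xmonomial M"]
    by (simp add: coef_at_xmonomial)
  then show ?thesis
    by (rule pconst_inj)
qed

definition count_below :: "nat \<Rightarrow> nat multiset \<Rightarrow> nat" where
  "count_below m M = size (filter_mset (\<lambda>a. a < m) M)"

definition dominates :: "nat multiset \<Rightarrow> nat multiset \<Rightarrow> bool" where
  "dominates N M \<longleftrightarrow> (\<forall>m. count_below m M \<le> count_below m N)"

lemma count_below_add_mset: "count_below m (add_mset x M) = (if x < m then Suc (count_below m M) else count_below m M)"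
  by (simp add: count_below_def)

lemma count_below_remove:
  "x \<in># M \<Longrightarrow> count_below m (M - {#x#}) = (if x < m then count_below m M - 1 else count_below m M)"
  by (metis count_below_add_mset diff_Suc_1 insert_DiffM)

lemma count_below_le_size: "count_below m M \<le> size M"
  by (simp add: count_below_def size_filter_mset_lesseq)

lemma count_below_eq_size_iff: "count_below m M = size M \<longleftrightarrow> (\<forall>a\<in>#M. a < m)"
proof
  assume "count_below m M = size M"
  then have "filter_mset (\<lambda>a. a < m) M = M"
    unfolding count_below_def by (metis mset_subset_size multiset_filter_subset subset_mset.not_eq_order_implies_strict nat_less_le)
  then show "\<forall>a\<in>#M. a < m"
    by (metis mem_Collect_eq set_mset_filter)
next
  assume "\<forall>a\<in>#M. a < m"
  then have "filter_mset (\<lambda>a. a < m) M = filter_mset (\<lambda>_. True) M"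
    by (intro filter_mset_cong0) auto
  then show "count_below m M = size M"
    by (simp add: count_below_def)
qed

lemma count_below_image_mset:
  assumes "\<And>a. a \<in># M \<Longrightarrow> f a < m \<longleftrightarrow> a < m"
  shows "count_below m (image_mset f M) = count_below m M"
  using assms by (induction M) (auto simp: count_below_add_mset)

lemma dominates_remove_Max:
  assumes "size N = size M" "dominates N M" "M \<noteq> {#}"
  shows "Max_mset N \<le> Max_mset M"
    and "dominates (N - {#Max_mset N#}) (M - {#Max_mset M#})"
proof -
  let ?a = "Max_mset M" and ?b = "Max_mset N"
  have N: "N \<noteq> {#}"
    using assms by auto
  have a: "?a \<in># M" and b: "?b \<in># N"
    using assms(3) N by simp_all
  have "count_below (Suc ?a) M = size M"
    using assms(3) by (simp add: count_below_eq_size_iff less_Suc_eq_le)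
  then have "count_below (Suc ?a) N = size N"
    using assms(1,2) count_below_le_size[of "Suc ?a" N] unfolding dominates_def by (metis le_antisym)
  then show ba: "?b \<le> ?a"
    using b by (auto simp: count_below_eq_size_iff)
  show "dominates (N - {#?b#}) (M - {#?a#})"
    unfolding dominates_def
  proof
    fix m
    have d: "count_below m M \<le> count_below m N"
      using assms(2) by (simp add: dominates_def)
    show "count_below m (M - {#?a#}) \<le> count_below m (N - {#?b#})"
    proof (cases "?b < m \<and> m \<le> ?a")
      case True
      then have "count_below m N = size N"
        using N by (auto simp: count_below_eq_size_iff)
      then show ?thesis
        using True a b assms(1) count_below_le_size[of m "M - {#?a#}"]
        by (simp add: count_below_remove size_Diff_submset)
    next
      case False
      then show ?thesis
        using d ba a b by (auto simp: count_below_remove)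
    qed
  qed
qed

lemma dominates_sum_mset:
  assumes "size N = size M" "dominates N M"
  shows "sum_mset N \<le> sum_mset M \<and> (sum_mset N = sum_mset M \<longrightarrow> N = M)"
  using assms
proof (induction "size M" arbitrary: M N)
  case (Suc n)
  let ?a = "Max_mset M" and ?b = "Max_mset N"
  have M: "M \<noteq> {#}" and N: "N \<noteq> {#}"
    using Suc by auto
  then have M_eq: "M = add_mset ?a (M - {#?a#})" and N_eq: "N = add_mset ?b (N - {#?b#})"
    by simp_all
  have "size (M - {#?a#}) = n" "size (N - {#?b#}) = n"
    using Suc.hyps(2) Suc.prems(1) M N by (simp_all add: size_Diff_submset)
  then have IH: "sum_mset (N - {#?b#}) \<le> sum_mset (M - {#?a#}) \<and>
      (sum_mset (N - {#?b#}) = sum_mset (M - {#?a#}) \<longrightarrow> N - {#?b#} = M - {#?a#})"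
    using Suc.hyps(1) dominates_remove_Max(2)[OF Suc.prems M] by simp
  have ba: "?b \<le> ?a"
    by (rule dominates_remove_Max(1)[OF Suc.prems M])
  have sums: "sum_mset M = ?a + sum_mset (M - {#?a#})" "sum_mset N = ?b + sum_mset (N - {#?b#})"
    by (metis M_eq sum_mset.add_mset, metis N_eq sum_mset.add_mset)
  show ?case
  proof
    show "sum_mset N \<le> sum_mset M"
      using sums IH ba by simp
    show "sum_mset N = sum_mset M \<longrightarrow> N = M"
    proof
      assume "sum_mset N = sum_mset M"
      then have "?b = ?a" "N - {#?b#} = M - {#?a#}"
        using sums IH ba by auto
      then show "N = M"
        using M_eq N_eq by metis
    qed
  qed
qed simp

lemma fprod_remove_Max_Qdes:
  assumes "w \<noteq> []"
  obtains q u where "\<forall>a\<in>#rho (fprod w). a \<le> q" "rho (fprod w) = add_mset q (rho (fprod u))"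
    "fprod (u @ [q]) = fprod w"
proof -
  have "fprod w \<noteq> empty_forest"
    using assms size_rho_fprod[of w] by auto
  then obtain q where q: "q \<in> Qdes (fprod w)" "\<forall>a\<in>#rho (fprod w). a \<le> q"
    "rho (fprod w) = add_mset q (rho (fdel (fprod w) q))"
    using rho_remove_Max_Qdes[OF is_forest_fprod] by blast
  obtain u where u: "fprod u = fdel (fprod w) q"
    using fprod_surj[OF is_forest_fdel[OF is_forest_fprod]] by blast
  have "fprod (u @ [q]) = fprod w"
    using u fmult_fdel[OF q(1)] by (simp add: fprod_snoc)
  then show ?thesis
    using q u by (intro that[of q u]) simp_all
qed

lemma E0_xmonomial_nonzero_cases:
  assumes "fst (E0_xmonomial q M) \<noteq> 0"
  obtains "q \<in># M" "snd (E0_xmonomial q M) = image_mset (shift_down (Suc q)) (M - {#q#})"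
    | "Suc q \<in># M" "snd (E0_xmonomial q M) = image_mset (shift_down q) (M - {#Suc q#})"
  using assms that by (auto simp: E0_xmonomial_def split: if_splits)

lemma size_E0_xmonomial:
  assumes "fst (E0_xmonomial q M) \<noteq> 0"
  shows "Suc (size (snd (E0_xmonomial q M))) = size M"
  using assms by (cases rule: E0_xmonomial_nonzero_cases) (metis insert_DiffM size_add_mset size_image_mset)+

lemma count_below_E0_xmonomial:
  assumes "fst (E0_xmonomial q M) \<noteq> 0" "m \<le> q"
  shows "count_below m (snd (E0_xmonomial q M)) = count_below m M"
  using assms(1)
proof (cases rule: E0_xmonomial_nonzero_cases)
  case 1
  have "count_below m (image_mset (shift_down (Suc q)) (M - {#q#})) = count_below m (M - {#q#})"
    by (rule count_below_image_mset) (use assms(2) in \<open>auto simp: shift_down_def\<close>)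
  then show ?thesis
    using 1 assms(2) by (simp add: count_below_remove)
next
  case 2
  have "count_below m (image_mset (shift_down q) (M - {#Suc q#})) = count_below m (M - {#Suc q#})"
    by (rule count_below_image_mset) (use assms(2) in \<open>auto simp: shift_down_def\<close>)
  then show ?thesis
    using 2 assms(2) by (simp add: count_below_remove)
qed

lemma E0_xmonomial_Max:
  assumes "\<forall>a\<in>#N. a \<le> q"
  shows "E0_xmonomial q (add_mset q N) = (1, N)"
proof -
  have "image_mset (shift_down (Suc q)) N = N"
    using assms by (intro image_mset_cong[where g=id, simplified]) (auto simp: shift_down_def)
  moreover have "Suc q \<notin># add_mset q N"
    using assms by auto
  ultimately show ?thesis
    by (simp add: E0_xmonomial_def)
qed

lemma coef0_nonzero_dominates:
  "length w = size M \<Longrightarrow> coef0 M w \<noteq> 0 \<Longrightarrow> dominates (rho (fprod w)) M"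
proof (induction "length w" arbitrary: w M rule: less_induct)
  case less
  show ?case
  proof (cases "w = []")
    case True
    then show ?thesis
      using less.prems by (simp add: dominates_def count_below_def)
  next
    case False
    obtain q u where bound: "\<forall>a\<in>#rho (fprod w). a \<le> q"
      and rho_w: "rho (fprod w) = add_mset q (rho (fprod u))" and uq: "fprod (u @ [q]) = fprod w"
      using fprod_remove_Max_Qdes[OF False] by blast
    let ?M' = "snd (E0_xmonomial q M)"
    have nonzero: "fst (E0_xmonomial q M) \<noteq> 0" "coef0 ?M' u \<noteq> 0"
      using coef0_indep[OF uq[symmetric] less.prems(1)] less.prems(2) by (simp_all add: coef0_snoc)
    have "Suc (length u) = length w"
      using length_fprod_eq[OF uq] by simp
    then have IH: "dominates (rho (fprod u)) ?M'"
      using size_E0_xmonomial[OF nonzero(1)] less.prems(1) nonzero(2) by (intro less.hyps) simp_all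
    show ?thesis
      unfolding dominates_def
    proof
      fix m
      show "count_below m M \<le> count_below m (rho (fprod w))"
      proof (cases "q < m")
        case True
        then have "count_below m (rho (fprod w)) = size (rho (fprod w))"
          using bound by (auto simp: count_below_eq_size_iff)
        then show ?thesis
          using count_below_le_size[of m M] less.prems(1) by (simp add: size_rho_fprod)
      next
        case False
        have "count_below m M = count_below m ?M'"
          using count_below_E0_xmonomial[OF nonzero(1)] False by simp
        also have "\<dots> \<le> count_below m (rho (fprod u))"
          using IH by (simp add: dominates_def)
        finally show ?thesis
          using rho_w False by (simp add: count_below_add_mset)
      qed
    qed
  qed
qed

lemma coef0_rho_self:
  "is_forest F \<Longrightarrow> length w = size (rho F) \<Longrightarrow> rho (fprod w) = rho F \<Longrightarrow>
    coef0 (rho F) w = (if fprod w = F then 1 else 0)"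
proof (induction "length w" arbitrary: w F rule: less_induct)
  case less
  show ?case
  proof (cases "w = []")
    case True
    then show ?thesis
      using less.prems rho_eq_empty_iff[of F] by (auto simp: coef0_Nil)
  next
    case False
    obtain q u where bound: "\<forall>a\<in>#rho (fprod w). a \<le> q"
      and rho_w: "rho (fprod w) = add_mset q (rho (fprod u))" and uq: "fprod (u @ [q]) = fprod w"
      using fprod_remove_Max_Qdes[OF False] by blast
    have "F \<noteq> empty_forest"
      using less.prems(2) False by auto
    then obtain q' where q': "q' \<in> Qdes F" "\<forall>a\<in>#rho F. a \<le> q'" and rho_F: "rho F = add_mset q' (rho (fdel F q'))"
      using rho_remove_Max_Qdes[OF less.prems(1)] by blast
    have "q' = q"
      using bound q'(2) rho_w rho_F less.prems(3) by (metis antisym union_single_eq_member)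
    then have q: "q \<in> Qdes F" "rho F = add_mset q (rho (fdel F q))" "rho (fprod u) = rho (fdel F q)"
      using q' rho_w rho_F less.prems(3) by simp_all
    have "coef0 (rho F) w = coef0 (rho F) (u @ [q])"
      using coef0_indep[OF uq[symmetric]] less.prems(2) by simp
    also have "\<dots> = coef0 (rho (fdel F q)) u"
      using q(2) q'(2) \<open>q' = q\<close> E0_xmonomial_Max[of "rho (fdel F q)" q] by (simp add: coef0_snoc)
    also have "\<dots> = (if fprod u = fdel F q then 1 else 0)"
      using length_fprod_eq[OF uq] less.prems(2) q(2,3)
      by (intro less.hyps is_forest_fdel less.prems(1)) auto
    also have "\<dots> = (if fprod w = F then 1 else 0)"
      using uq fmult_fdel[OF q(1)] fprod_snoc_iff[of u q F] by (auto simp: fprod_snoc)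
    finally show ?thesis .
  qed
qed

section \<open>Existence of the double forest polynomials\<close>

definition forest_less :: "forest \<Rightarrow> forest \<Rightarrow> bool" where
  "forest_less G F \<longleftrightarrow> size (rho G) < size (rho F) \<or>
     (size (rho G) = size (rho F) \<and> sum_mset (rho G) < sum_mset (rho F))"

definition dual_poly :: "forest \<Rightarrow> poly \<Rightarrow> bool" where
  "dual_poly F p \<longleftrightarrow> homog (size (rho F)) p \<and> (\<forall>w. coef_at {} p w = (if fprod w = F then 1 else 0))"

lemma coef_at_xmonomial_rho:
  assumes "is_forest F" "\<not> forest_less (fprod w) F"
  shows "coef_at {} (xmonomial (rho F)) w = (if fprod w = F then 1 else 0)"
proof (cases "length w = size (rho F)")
  case False
  then have "size (rho F) < length w"
    using assms(2) by (auto simp: forest_less_def size_rho_fprod)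
  then show ?thesis
    using coef_at_homog_long[OF homog_xmonomial] size_rho_fprod[of w] by auto
next
  case True
  have "coef0 (rho F) w = (if fprod w = F then 1 else 0)"
  proof (cases "coef0 (rho F) w = 0")
    case False
    then have "dominates (rho (fprod w)) (rho F)"
      using coef0_nonzero_dominates True by blast
    then have "rho (fprod w) = rho F"
      using dominates_sum_mset[of "rho (fprod w)" "rho F"] assms(2) True
      by (simp add: forest_less_def size_rho_fprod)
    then show ?thesis
      using coef0_rho_self[OF assms(1) True] by simp
  next
    case zero: True
    then show ?thesis
      using coef0_rho_self[of "fprod w" w] True by (auto simp: is_forest_fprod)
  qed
  then show ?thesis
    using coef_at_xmonomial[OF True] by (simp add: pconst_1 pconst_0)
qed

lemma homog_forest_coef_mult:
  assumes "homog n f" "is_forest G" "size (rho G) \<le> n" "homog (size (rho G)) p"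
  shows "homog n (forest_coef f G * p)"
proof -
  obtain w where w: "fprod w = G"
    using fprod_surj assms(2) by blast
  then have "homog (n - size (rho G)) (forest_coef f G)"
    using homog_coef_at[OF assms(1), of w "{}"] forest_coef_fprod[of f w] size_rho_fprod[of w] by simp
  then show ?thesis
    using homog_mult[OF _ assms(4)] assms(3) by fastforce
qed

lemma sum_mult_indicator:
  fixes c :: "'a \<Rightarrow> 'b::semiring_1"
  assumes "finite S"
  shows "(\<Sum>G\<in>S. c G * (if H = G then 1 else 0)) = (if H \<in> S then c H else 0)"
  using assms by (simp add: if_distrib[of "\<lambda>x. _ * x"] cong: if_cong)

text \<open>Gram-Schmidt: subtract from x^{rho F} its coefficients times the dual polynomials of
  the finitely many smaller forests at which they do not vanish.\<close>

lemma dual_poly_exists_step: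
  assumes F: "is_forest F"
    and IH: "\<And>G. is_forest G \<Longrightarrow> forest_less G F \<Longrightarrow> \<exists>p. dual_poly G p"
  shows "\<exists>p. dual_poly F p"
proof -
  let ?x = "xmonomial (rho F)" and ?n = "size (rho F)"
  define P where "P G = (SOME p. dual_poly G p)" for G
  have P: "dual_poly G (P G)" if "is_forest G" "forest_less G F" for G
    unfolding P_def using IH[OF that] by (rule someI_ex)
  define S where "S = {G. is_forest G \<and> forest_less G F \<and> forest_coef ?x G \<noteq> 0}"
  have fin: "finite S"
    using finite_forest_coef_nonzero[of ?x] by (rule finite_subset[rotated]) (auto simp: S_def)
  define p where "p = ?x - (\<Sum>G\<in>S. forest_coef ?x G * P G)"
  have "homog ?n (forest_coef ?x G * P G)" if G: "G \<in> S" for G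
    using G P[of G] by (intro homog_forest_coef_mult homog_xmonomial) (auto simp: S_def forest_less_def dual_poly_def)
  then have "homog ?n p"
    unfolding p_def by (intro homog_diff homog_sum homog_xmonomial)
  moreover have "coef_at {} p w = (if fprod w = F then 1 else 0)" for w
  proof -
    let ?H = "fprod w"
    have "(\<Sum>G\<in>S. forest_coef ?x G * coef_at {} (P G) w) = (\<Sum>G\<in>S. forest_coef ?x G * (if ?H = G then 1 else 0))"
      using P by (intro sum.cong refl) (auto simp: S_def dual_poly_def)
    also have "\<dots> = (if ?H \<in> S then forest_coef ?x ?H else 0)"
      by (rule sum_mult_indicator[OF fin])
    finally have sum: "(\<Sum>G\<in>S. forest_coef ?x G * coef_at {} (P G) w) = (if ?H \<in> S then forest_coef ?x ?H else 0)" .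
    have "coef_at {} p w = coef_at {} ?x w - (\<Sum>G\<in>S. forest_coef ?x G * coef_at {} (P G) w)"
      unfolding p_def using fin by (simp add: coef_at_sum coef_at_mult_x_free forest_coef_def x_below_coef_at)
    also have "\<dots> = forest_coef ?x ?H - (if ?H \<in> S then forest_coef ?x ?H else 0)"
      by (simp add: sum forest_coef_fprod)
    also have "\<dots> = (if ?H = F then 1 else 0)"
      using coef_at_xmonomial_rho[OF F, of w] is_forest_fprod[of w]
      by (auto simp: S_def forest_coef_fprod forest_less_def)
    finally show ?thesis .
  qed
  ultimately show ?thesis
    by (auto simp: dual_poly_def)
qed

lemma dual_poly_exists: "is_forest F \<Longrightarrow> \<exists>p. dual_poly F p"
proof (induction "size (rho F)" arbitrary: F rule: less_induct)
  case less
  note smaller_size = less.hyps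
  have "\<forall>G. is_forest G \<longrightarrow> size (rho G) = size (rho F) \<longrightarrow> sum_mset (rho G) = s \<longrightarrow> (\<exists>p. dual_poly G p)" for s
  proof (induction s rule: less_induct)
    case (less s)
    show ?case
    proof (intro allI impI)
      fix G assume G: "is_forest G" "size (rho G) = size (rho F)" "sum_mset (rho G) = s"
      show "\<exists>p. dual_poly G p"
      proof (rule dual_poly_exists_step[OF G(1)])
        fix H assume "is_forest H" "forest_less H G"
        then show "\<exists>p. dual_poly H p"
          using smaller_size less.IH G by (auto simp: forest_less_def)
      qed
    qed
  qed
  then show ?case
    using less.prems by blast
qed

definition dual_basis :: "forest \<Rightarrow> poly" where
  "dual_basis F = (if is_forest F then (SOME p. dual_poly F p) else 0)"

lemma dual_poly_dual_basis: "is_forest F \<Longrightarrow> dual_poly F (dual_basis F)"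
  unfolding dual_basis_def using dual_poly_exists by (simp add: someI_ex)

lemma dfp_eq_dual_basis: "dfp = dual_basis"
proof -
  have "dfp_family dual_basis"
    using dual_poly_dual_basis by (intro dfp_familyI) (auto simp: dual_poly_def dual_basis_def)
  then show ?thesis
    unfolding dfp_def using dfp_family_unique by blast
qed

lemma coef_at_dfp: "is_forest F \<Longrightarrow> coef_at {} (dfp F) w = (if fprod w = F then 1 else 0)"
  using dual_poly_dual_basis by (simp add: dfp_eq_dual_basis dual_poly_def)

lemma dfp_expansion:
  "f = (\<Sum>F\<in>{F. is_forest F \<and> forest_coef f F \<noteq> 0}. forest_coef f F * dfp F)"
  (is "f = (\<Sum>F\<in>?S. _)")
proof -
  have "coef_at {} (f - (\<Sum>F\<in>?S. forest_coef f F * dfp F)) w = 0" for w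
  proof -
    have "coef_at {} (\<Sum>F\<in>?S. forest_coef f F * dfp F) w = (\<Sum>F\<in>?S. forest_coef f F * (if fprod w = F then 1 else 0))"
      using finite_forest_coef_nonzero[of f]
      by (simp add: coef_at_sum coef_at_mult_x_free forest_coef_def x_below_coef_at coef_at_dfp)
    also have "\<dots> = coef_at {} f w"
      using finite_forest_coef_nonzero[of f] is_forest_fprod[of w]
      by (auto simp: sum_mult_indicator forest_coef_fprod)
    finally show ?thesis
      by simp
  qed
  then have "f - (\<Sum>F\<in>?S. forest_coef f F * dfp F) = 0"
    by (rule coef_at_eq_0_imp_0)
  then show ?thesis
    by simp
qed

theorem theorem10p10:
  fixes f :: poly
  shows "\<exists>a :: forest \<Rightarrow> poly.
           finite {F. is_forest F \<and> a F \<noteq> 0} \<and>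
           (\<forall>is. a (fprod is) = coef f is) \<and>
           f = (\<Sum>F\<in>{F. is_forest F \<and> a F \<noteq> 0}. a F * dfp F)"
proof (intro exI[of _ "forest_coef f"] conjI allI)
  show "finite {F. is_forest F \<and> forest_coef f F \<noteq> 0}"
    by (rule finite_forest_coef_nonzero)
  show "forest_coef f (fprod is) = coef f is" for "is"
    by (simp add: forest_coef_fprod coef_eq_coef_at)
  show "f = (\<Sum>F\<in>{F. is_forest F \<and> forest_coef f F \<noteq> 0}. forest_coef f F * dfp F)"
    by (rule dfp_expansion)
qed

end
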